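(* In the setting below, for $\varphi\in C_b(\mathbb R^d)$, $t\ge0$, $x\in\mathbb R^d$ put $(P_t\varphi)(x):=V(t,x;\varphi):=\sup_{\alpha\in\mathcal A}\mathbb E\big(\varphi(X^\alpha(t,x))-\int_0^tg(\alpha(s))ds\big)$. Then each $P_t$ maps $C_b(\mathbb R^d)$ into itself with $\|P_t\varphi\|_\infty\le\|\varphi\|_\infty$; $P_t\varphi\to\varphi$ uniformly on compact subsets of $\mathbb R^d$ as $t\to0$ for every $\varphi\in C_b(\mathbb R^d)$; and for all $R,T,c\ge0$ and $\varepsilon>0$ there is $r>0$ such that for all $\varphi_1,\varphi_2\in C_b(\mathbb R^d)$ with $\|\varphi_i\|_\infty\le R$ and $\sup_{|y|\le r}|\varphi_1(y)-\varphi_2(y)|<\varepsilon/3$ one has $\sup_{t\in[0,T]}\sup_{|x|\le c}|V(t,x;\varphi_1)-V(t,x;\varphi_2)|<\varepsilon$.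
   Context: $W$ is a $d$-dimensional Brownian motion on a complete filtered probability space satisfying the usual conditions, $\sigma>0$. $A\subset\mathbb R^m$ is nonempty with $0\in A$; admissible controls $\mathcal A$ are progressively measurable $\alpha\colon\Omega\times[0,\infty)\to A$ with $\mathbb E\int_0^t|\alpha(s)|ds<\infty$ for all $t$. $b\colon\mathbb R^d\times A\to\mathbb R^d$ is measurable with $b(x,0)=0$, $|b(x_1,a)-b(x_2,a)|\le C|x_1-x_2|$ and $|b(x,a)|\le C(1+|x|+|a|)$ for a constant $C\ge0$. $X^\alpha(t,x)$ is the unique strong solution of $dX=b(X,\alpha(t))dt+\sigma dW$, $X(0)=x$. The running cost $g\colon A\to[0,\infty)$ satisfies $g(0)=0$ and $\bar g^*(y):=\sup_{a\in A}(|a|y-g(a))<\infty$ for all $y\ge0$. $C_b(\mathbb R^d)$ is the space of bounded continuous functions with sup norm $\|\cdot\|_\infty$. *)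

theory Defs
  imports "HOL-Probability.Probability"
begin

text \<open>Usual conditions for a filtration F (indexed by t \<ge> 0) on a probability space M:
  each F t is a sub-sigma-algebra of M, F is increasing, F 0 contains all M-null sets,
  and F is right-continuous.  (Completeness of M is stated separately via complete_measure.)\<close>
definition usual_filtration :: "'a measure \<Rightarrow> (real \<Rightarrow> 'a measure) \<Rightarrow> bool" where
  "usual_filtration M F \<longleftrightarrow>
     (\<forall>t\<ge>0. space (F t) = space M \<and> sets (F t) \<subseteq> sets M) \<and>
     (\<forall>s t. 0 \<le> s \<longrightarrow> s \<le> t \<longrightarrow> sets (F s) \<subseteq> sets (F t)) \<and>
     (\<forall>N\<in>null_sets M. N \<in> sets (F 0)) \<and>
     (\<forall>t\<ge>0. sets (F t) = (\<Inter>u\<in>{t<..}. sets (F u)))"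

definition gauss_density :: "real \<Rightarrow> real^'d \<Rightarrow> real" where
  "gauss_density h y = (2 * pi * h) powr (- real CARD('d) / 2) * exp (- (norm y)\<^sup>2 / (2 * h))"

text \<open>W is a d-dimensional (F_t)-Brownian motion: W 0 = 0, continuous paths, adapted,
  and for 0 \<le> s < t the increment W t - W s is independent of F s with law N(0,(t-s) I).\<close>
definition brownian_motion :: "'a measure \<Rightarrow> (real \<Rightarrow> 'a measure) \<Rightarrow> (real \<Rightarrow> 'a \<Rightarrow> real^'d) \<Rightarrow> bool" where
  "brownian_motion M F W \<longleftrightarrow>
     (\<forall>\<omega>\<in>space M. W 0 \<omega> = 0 \<and> continuous_on {0..} (\<lambda>t. W t \<omega>)) \<and>
     (\<forall>t\<ge>0. W t \<in> borel_measurable (F t)) \<and>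
     (\<forall>s t. 0 \<le> s \<longrightarrow> s < t \<longrightarrow>
        (\<forall>B\<in>sets (F s). \<forall>C\<in>sets borel.
           measure M (B \<inter> {\<omega>\<in>space M. W t \<omega> - W s \<omega> \<in> C})
             = measure M B * measure (density lborel (\<lambda>y. ennreal (gauss_density (t - s) y))) C))"

definition progressive :: "'a measure \<Rightarrow> (real \<Rightarrow> 'a measure) \<Rightarrow> ('a \<Rightarrow> real \<Rightarrow> 'b::topological_space) \<Rightarrow> bool" where
  "progressive M F \<alpha> \<longleftrightarrow>
     (\<forall>t\<ge>0. (\<lambda>(\<omega>, s). \<alpha> \<omega> s) \<in> borel_measurable (F t \<Otimes>\<^sub>M restrict_space borel {0..t}))"

definition admissible :: "'a measure \<Rightarrow> (real \<Rightarrow> 'a measure) \<Rightarrow> (real^'m) set \<Rightarrow> ('a \<Rightarrow> real \<Rightarrow> real^'m) \<Rightarrow> bool" where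
  "admissible M F A \<alpha> \<longleftrightarrow>
     progressive M F \<alpha> \<and>
     (\<forall>\<omega>\<in>space M. \<forall>s\<ge>0. \<alpha> \<omega> s \<in> A) \<and>
     (\<forall>t\<ge>0. (\<integral>\<^sup>+\<omega>. (\<integral>\<^sup>+s. ennreal (norm (\<alpha> \<omega> s)) * indicator {0..t} s \<partial>lborel) \<partial>M) < \<infinity>)"

definition strong_solution :: "'a measure \<Rightarrow> (real \<Rightarrow> 'a measure) \<Rightarrow> (real \<Rightarrow> 'a \<Rightarrow> real^'d) \<Rightarrow>
    (real^'d \<Rightarrow> real^'m \<Rightarrow> real^'d) \<Rightarrow> real \<Rightarrow> ('a \<Rightarrow> real \<Rightarrow> real^'m) \<Rightarrow> real^'d \<Rightarrow>
    (real \<Rightarrow> 'a \<Rightarrow> real^'d) \<Rightarrow> bool" where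
  "strong_solution M F W b \<sigma> \<alpha> x X \<longleftrightarrow>
     (\<forall>t\<ge>0. X t \<in> borel_measurable (F t)) \<and>
     (AE \<omega> in M. continuous_on {0..} (\<lambda>t. X t \<omega>) \<and>
        (\<forall>t\<ge>0. set_integrable lborel {0..t} (\<lambda>s. b (X s \<omega>) (\<alpha> \<omega> s)) \<and>
                X t \<omega> = x + (\<integral>s\<in>{0..t}. b (X s \<omega>) (\<alpha> \<omega> s) \<partial>lborel) + \<sigma> *\<^sub>R W t \<omega>))"

text \<open>Expected payoff E( \<phi>(X t) - \<integral>_0^t g(\<alpha> s) ds ), computed in the extended reals
  (the cost term is nonnegative and may have infinite expectation).\<close>
definition payoff :: "'a measure \<Rightarrow> (real^'m \<Rightarrow> real) \<Rightarrow> (real^'d \<Rightarrow> real) \<Rightarrow>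
    (real \<Rightarrow> 'a \<Rightarrow> real^'d) \<Rightarrow> ('a \<Rightarrow> real \<Rightarrow> real^'m) \<Rightarrow> real \<Rightarrow> ereal" where
  "payoff M g \<phi> X \<alpha> t =
     ereal (\<integral>\<omega>. \<phi> (X t \<omega>) \<partial>M)
     - enn2ereal (\<integral>\<^sup>+\<omega>. (\<integral>\<^sup>+s. ennreal (g (\<alpha> \<omega> s)) * indicator {0..t} s \<partial>lborel) \<partial>M)"

text \<open>Value function V(t,x;\<phi>) = sup over admissible \<alpha> of the payoff, where Xs \<alpha> x is X^\<alpha>(.,x).\<close>
definition value_fn :: "'a measure \<Rightarrow> (real \<Rightarrow> 'a measure) \<Rightarrow> (real^'m) set \<Rightarrow> (real^'m \<Rightarrow> real) \<Rightarrow>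
    (('a \<Rightarrow> real \<Rightarrow> real^'m) \<Rightarrow> real^'d \<Rightarrow> real \<Rightarrow> 'a \<Rightarrow> real^'d) \<Rightarrow>
    real \<Rightarrow> real^'d \<Rightarrow> (real^'d \<Rightarrow> real) \<Rightarrow> ereal" where
  "value_fn M F A g Xs t x \<phi> = (SUP \<alpha>\<in>{\<alpha>. admissible M F A \<alpha>}. payoff M g \<phi> (Xs \<alpha> x) \<alpha> t)"

definition sup_norm :: "('b \<Rightarrow> real) \<Rightarrow> real" where
  "sup_norm \<phi> = (SUP y. \<bar>\<phi> y\<bar>)"

end

theory Submission
  imports Defs
begin

text \<open>Gronwall's inequality applied pathwise to the integral
  equation bounds \<open>|X t - x|\<close> in terms of \<open>|W|\<close>, \<open>\<integral>|\<alpha>|\<close> and \<open>t\<close>, and shows that the solutions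
  started at \<open>x\<close> and \<open>x'\<close> stay within \<open>|x - x'| (1 + C t exp (C t))\<close> of each other. Only controls
  of expected cost at most \<open>2 R + 1\<close> matter in the supremum defining \<open>V\<close> (any other one does worse
  than \<open>\<alpha> = 0\<close>), and for them Young's inequality \<open>|a| \<le> (g a + g\<^sup>* y) / y\<close> bounds \<open>E \<integral>|\<alpha>|\<close>.
  Hence \<open>E |X t - x|\<close> is bounded uniformly over the relevant controls, locally uniformly in
  \<open>(t, x)\<close>, and tends to \<open>0\<close> with \<open>t\<close>. By Markov's inequality the terminal state then stays in a
  fixed ball with high probability, and on that ball the terminal payoffs are uniformly continuous,
  respectively uniformly close.\<close>

section \<open>Gronwall estimates for integral equations\<close>

lemma gronwall_integral_weighted:
  fixes u k :: "real \<Rightarrow> real"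
  assumes t: "t \<ge> 0"
    and cu: "continuous_on {0..t} u" and ck: "continuous_on {0..t} k"
    and ineq: "\<And>s. s \<in> {0..t} \<Longrightarrow> u s \<le> k s + C * integral {0..s} u"
  shows "integral {0..t} u \<le> exp (C * t) * integral {0..t} (\<lambda>r. exp (- C * r) * k r)"
proof -
  define U where "U s = integral {0..s} u" for s
  define K where "K s = integral {0..s} (\<lambda>r. exp (- C * r) * k r)" for s
  define G where "G s = exp (- C * s) * U s - K s" for s
  have cek: "continuous_on {0..t} (\<lambda>r. exp (- C * r) * k r)"
    by (intro continuous_intros ck)
  have cG: "continuous_on {0..t} G"
    unfolding G_def U_def K_def
    by (intro continuous_intros indefinite_integral_continuous_1 integrable_continuous_real cu cek)
  have "\<exists>y. DERIV G s :> y \<and> y \<le> 0" if s: "0 < s" "s < t" for s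
  proof -
    have sin: "s \<in> {0..t}" using s by auto
    have atw: "at s within {0..t} = at s"
      by (rule at_within_interior) (use s in auto)
    have dU: "(U has_real_derivative u s) (at s)"
      using integral_has_vector_derivative[OF cu sin] unfolding U_def atw
      by (simp add: has_real_derivative_iff_has_vector_derivative)
    have dK: "(K has_real_derivative (exp (- C * s) * k s)) (at s)"
      using integral_has_vector_derivative[OF cek sin] unfolding K_def atw
      by (simp add: has_real_derivative_iff_has_vector_derivative)
    have "DERIV G s :> exp (- C * s) * (u s - k s - C * U s)"
      unfolding G_def[abs_def]
      by (rule derivative_eq_intros dU dK refl | simp add: algebra_simps)+
    moreover have "u s - k s - C * U s \<le> 0" using ineq[OF sin] unfolding U_def by simp
    ultimately show ?thesis by (intro exI conjI) (auto simp: mult_nonneg_nonpos)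
  qed
  then have "G t \<le> G 0" by (intro DERIV_nonpos_imp_decreasing_open[OF t _ cG]) auto
  then have "exp (- C * t) * U t \<le> K t" unfolding G_def U_def K_def by simp
  then show ?thesis unfolding U_def K_def by (simp add: exp_minus field_simps)
qed

lemma gronwall_integral:
  fixes u k :: "real \<Rightarrow> real"
  assumes t: "t \<ge> 0" and C: "C \<ge> 0"
    and cu: "continuous_on {0..t} u" and ck: "continuous_on {0..t} k"
    and k0: "\<And>s. s \<in> {0..t} \<Longrightarrow> k s \<ge> 0"
    and ineq: "\<And>s. s \<in> {0..t} \<Longrightarrow> u s \<le> k s + C * integral {0..s} u"
  shows "integral {0..t} u \<le> exp (C * t) * integral {0..t} k"
proof -
  have "integral {0..t} (\<lambda>r. exp (- C * r) * k r) \<le> integral {0..t} k"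
  proof (rule integral_le)
    show "(\<lambda>r. exp (- C * r) * k r) integrable_on {0..t}"
      by (intro integrable_continuous_real continuous_intros ck)
    show "k integrable_on {0..t}" by (rule integrable_continuous_real[OF ck])
    fix r assume r: "r \<in> {0..t}"
    have "exp (- C * r) \<le> 1" using r C by simp
    then show "exp (- C * r) * k r \<le> k r" using k0[OF r] by (simp add: mult_left_le_one_le)
  qed
  with gronwall_integral_weighted[OF t cu ck ineq] show ?thesis
    by (meson exp_gt_zero mult_left_mono less_imp_le order_trans)
qed

lemma norm_integral_le_linear_growth:
  fixes X :: "real \<Rightarrow> 'a::euclidean_space" and \<alpha> :: "real \<Rightarrow> 'b::real_normed_vector"
    and f :: "real \<Rightarrow> 'c::euclidean_space"
  assumes C: "C \<ge> 0" and s: "s \<in> {0..t}"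
    and cX: "continuous_on {0..t} X" and f_int: "f integrable_on {0..s}"
    and growth: "\<And>r. r \<in> {0..t} \<Longrightarrow> norm (f r) \<le> C * (1 + norm (X r) + norm (\<alpha> r))"
    and \<alpha>_int: "(\<lambda>r. norm (\<alpha> r)) integrable_on {0..t}"
  shows "norm (integral {0..s} f)
    \<le> C * s + C * integral {0..s} (\<lambda>r. norm (X r)) + C * integral {0..t} (\<lambda>r. norm (\<alpha> r))"
proof -
  have sub: "{0..s} \<subseteq> {0..t}" using s by auto
  have iX: "(\<lambda>r. norm (X r)) integrable_on {0..s}"
    by (intro integrable_continuous_real continuous_intros continuous_on_subset[OF cX sub])
  have i\<alpha>: "(\<lambda>r. norm (\<alpha> r)) integrable_on {0..s}"
    by (rule integrable_on_subinterval[OF \<alpha>_int sub])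
  have iCX: "(\<lambda>r. C * norm (X r)) integrable_on {0..s}"
    and iC\<alpha>: "(\<lambda>r. C * norm (\<alpha> r)) integrable_on {0..s}"
    using integrable_on_cmult_left[OF iX, of C] integrable_on_cmult_left[OF i\<alpha>, of C] by simp_all
  have "norm (integral {0..s} f) \<le> integral {0..s} (\<lambda>r. C + C * norm (X r) + C * norm (\<alpha> r))"
    by (rule integral_norm_bound_integral[OF f_int])
       (use growth sub in \<open>auto simp: algebra_simps intro!: integrable_add iCX iC\<alpha>\<close>)
  also have "\<dots> = C * s + C * integral {0..s} (\<lambda>r. norm (X r)) + C * integral {0..s} (\<lambda>r. norm (\<alpha> r))"
    using s iCX iC\<alpha> by (subst integral_add, auto intro: integrable_add)+
  also have "integral {0..s} (\<lambda>r. norm (\<alpha> r)) \<le> integral {0..t} (\<lambda>r. norm (\<alpha> r))"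
    by (rule integral_subset_le[OF sub i\<alpha> \<alpha>_int]) simp
  finally show ?thesis using C by (simp add: mult_left_mono)
qed

lemma integral_equation_deviation_le:
  fixes X w f :: "real \<Rightarrow> 'a::euclidean_space" and \<alpha> :: "real \<Rightarrow> 'b::real_normed_vector"
  assumes t: "t \<ge> 0" and C: "C \<ge> 0" and \<sigma>: "\<sigma> \<ge> 0"
    and cX: "continuous_on {0..t} X" and cw: "continuous_on {0..t} w"
    and f_int: "\<And>s. s \<in> {0..t} \<Longrightarrow> f integrable_on {0..s}"
    and eq: "\<And>s. s \<in> {0..t} \<Longrightarrow> X s = x + integral {0..s} f + \<sigma> *\<^sub>R w s"
    and growth: "\<And>r. r \<in> {0..t} \<Longrightarrow> norm (f r) \<le> C * (1 + norm (X r) + norm (\<alpha> r))"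
    and \<alpha>_int: "(\<lambda>r. norm (\<alpha> r)) integrable_on {0..t}"
  shows "norm (X t - x) \<le> \<sigma> * norm (w t) + C * t + C * integral {0..t} (\<lambda>r. norm (\<alpha> r))
     + C * (exp (C * t) * (t * (norm x + C * t + C * integral {0..t} (\<lambda>r. norm (\<alpha> r)))
          + \<sigma> * integral {0..t} (\<lambda>r. norm (w r))))"
proof -
  define a where "a = integral {0..t} (\<lambda>r. norm (\<alpha> r))"
  define k where "k s = norm x + C * t + C * a + \<sigma> * norm (w s)" for s
  have a0: "a \<ge> 0" unfolding a_def by (rule integral_nonneg[OF \<alpha>_int]) simp
  have tt: "t \<in> {0..t}" using t by simp
  have I: "norm (integral {0..s} f) \<le> C * s + C * integral {0..s} (\<lambda>r. norm (X r)) + C * a"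
    if s: "s \<in> {0..t}" for s
    unfolding a_def by (rule norm_integral_le_linear_growth[OF C s cX f_int[OF s] growth \<alpha>_int])
  have "norm (X s) \<le> k s + C * integral {0..s} (\<lambda>r. norm (X r))" if s: "s \<in> {0..t}" for s
  proof -
    have "norm (X s) \<le> norm x + norm (integral {0..s} f) + \<sigma> * norm (w s)"
      unfolding eq[OF s] using \<sigma> by (metis abs_of_nonneg norm_scaleR norm_triangle_le norm_triangle_mono order_refl)
    moreover have "C * s \<le> C * t" using s C by (simp add: mult_left_mono)
    ultimately show ?thesis using I[OF s] unfolding k_def by linarith
  qed
  moreover have "continuous_on {0..t} (\<lambda>r. norm (X r))" "continuous_on {0..t} k"
    unfolding k_def by (intro continuous_intros cX cw)+
  ultimately have gr: "integral {0..t} (\<lambda>r. norm (X r)) \<le> exp (C * t) * integral {0..t} k"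
    using gronwall_integral[OF t C] C a0 \<sigma> by (simp add: k_def)
  have iw: "(\<lambda>r. norm (w r)) integrable_on {0..t}"
    by (intro integrable_continuous_real continuous_intros cw)
  have "integral {0..t} k = integral {0..t} (\<lambda>s. norm x + C * t + C * a) + integral {0..t} (\<lambda>s. \<sigma> * norm (w s))"
    unfolding k_def by (rule integral_add) (use iw integrable_on_cmult_left[OF iw, of \<sigma>] in auto)
  then have ik: "integral {0..t} k = t * (norm x + C * t + C * a) + \<sigma> * integral {0..t} (\<lambda>r. norm (w r))"
    using t by simp
  have "norm (X t - x) \<le> norm (integral {0..t} f) + \<sigma> * norm (w t)"
    using eq[OF tt] norm_triangle_ineq[of "integral {0..t} f" "\<sigma> *\<^sub>R w t"] \<sigma> by simp
  also have "\<dots> \<le> C * t + C * integral {0..t} (\<lambda>r. norm (X r)) + C * a + \<sigma> * norm (w t)"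
    using I[OF tt] by simp
  also have "C * integral {0..t} (\<lambda>r. norm (X r)) \<le> C * (exp (C * t) * integral {0..t} k)"
    by (rule mult_left_mono[OF gr C])
  finally show ?thesis unfolding ik a_def by simp
qed

lemma integral_equation_dist_le:
  fixes X1 X2 w f1 f2 :: "real \<Rightarrow> 'a::euclidean_space"
  assumes t: "t \<ge> 0" and C: "C \<ge> 0"
    and c1: "continuous_on {0..t} X1" and c2: "continuous_on {0..t} X2"
    and i1: "\<And>s. s \<in> {0..t} \<Longrightarrow> f1 integrable_on {0..s}"
    and i2: "\<And>s. s \<in> {0..t} \<Longrightarrow> f2 integrable_on {0..s}"
    and eq1: "\<And>s. s \<in> {0..t} \<Longrightarrow> X1 s = x1 + integral {0..s} f1 + \<sigma> *\<^sub>R w s"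
    and eq2: "\<And>s. s \<in> {0..t} \<Longrightarrow> X2 s = x2 + integral {0..s} f2 + \<sigma> *\<^sub>R w s"
    and lip: "\<And>r. r \<in> {0..t} \<Longrightarrow> norm (f1 r - f2 r) \<le> C * norm (X1 r - X2 r)"
  shows "norm (X1 t - X2 t) \<le> norm (x1 - x2) * (1 + C * t * exp (C * t))"
proof -
  define v where "v r = norm (X1 r - X2 r)" for r
  have cv: "continuous_on {0..t} v" unfolding v_def by (intro continuous_intros c1 c2)
  have ineq: "v s \<le> norm (x1 - x2) + C * integral {0..s} v" if s: "s \<in> {0..t}" for s
  proof -
    have "v integrable_on {0..s}"
      using s by (intro integrable_continuous_real continuous_on_subset[OF cv]) auto
    then have iv: "(\<lambda>r. C * v r) integrable_on {0..s}"
      using integrable_on_cmult_left by force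
    have "X1 s - X2 s = (x1 - x2) + integral {0..s} (\<lambda>r. f1 r - f2 r)"
      using eq1[OF s] eq2[OF s] integral_diff[OF i1[OF s] i2[OF s]] by (simp add: algebra_simps)
    then have "v s \<le> norm (x1 - x2) + norm (integral {0..s} (\<lambda>r. f1 r - f2 r))"
      unfolding v_def by (simp add: norm_triangle_ineq)
    also have "norm (integral {0..s} (\<lambda>r. f1 r - f2 r)) \<le> integral {0..s} (\<lambda>r. C * v r)"
      by (rule integral_norm_bound_integral[OF integrable_diff[OF i1[OF s] i2[OF s]] iv])
         (use lip s in \<open>auto simp: v_def\<close>)
    finally show ?thesis by simp
  qed
  have gr: "integral {0..t} v \<le> exp (C * t) * (t * norm (x1 - x2))"
    using gronwall_integral[OF t C cv _ _ ineq] t by simp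
  show ?thesis
    using ineq[of t] mult_left_mono[OF gr C] t unfolding v_def by (simp add: algebra_simps)
qed

lemma nn_integral_interval_eq_integral:
  fixes f :: "real \<Rightarrow> real"
  assumes m: "(\<lambda>s. indicator {0..t} s *\<^sub>R f s) \<in> borel_measurable lborel"
    and f0: "\<And>s. f s \<ge> 0"
    and fin: "(\<integral>\<^sup>+s. ennreal (f s) * indicator {0..t} s \<partial>lborel) < \<infinity>"
  shows "f integrable_on {0..t}"
    and "(\<integral>\<^sup>+s. ennreal (f s) * indicator {0..t} s \<partial>lborel) = ennreal (integral {0..t} f)"
proof -
  have eq: "(\<integral>\<^sup>+s. ennreal (f s) * indicator {0..t} s \<partial>lborel)
      = (\<integral>\<^sup>+s. ennreal (indicator {0..t} s *\<^sub>R f s) \<partial>lborel)"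
    by (intro nn_integral_cong) (auto split: split_indicator)
  have i: "integrable lborel (\<lambda>s. indicator {0..t} s *\<^sub>R f s)"
    by (rule integrableI_bounded[OF m]) (use eq fin f0 in \<open>simp add: abs_mult\<close>)
  then have si: "set_integrable lborel {0..t} f" unfolding set_integrable_def .
  show "f integrable_on {0..t}" by (rule set_borel_integral_eq_integral(1)[OF si])
  have "(\<integral>\<^sup>+s. ennreal (indicator {0..t} s *\<^sub>R f s) \<partial>lborel)
      = ennreal (integral\<^sup>L lborel (\<lambda>s. indicator {0..t} s *\<^sub>R f s))"
    by (rule nn_integral_eq_integral[OF i]) (use f0 in auto)
  also have "integral\<^sup>L lborel (\<lambda>s. indicator {0..t} s *\<^sub>R f s) = integral {0..t} f"
    using set_borel_integral_eq_integral(2)[OF si] unfolding set_lebesgue_integral_def .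
  finally show "(\<integral>\<^sup>+s. ennreal (f s) * indicator {0..t} s \<partial>lborel) = ennreal (integral {0..t} f)"
    unfolding eq .
qed

lemma nn_integral_interval_eq_integral_continuous:
  fixes f :: "real \<Rightarrow> real"
  assumes c: "continuous_on {0..t} f" and f0: "\<And>s. f s \<ge> 0"
  shows "(\<integral>\<^sup>+s. ennreal (f s) * indicator {0..t} s \<partial>lborel) = ennreal (integral {0..t} f)"
proof -
  have si: "set_integrable lborel {0..t} f" by (rule borel_integrable_atLeastAtMost'[OF c])
  then have m: "(\<lambda>s. indicator {0..t} s *\<^sub>R f s) \<in> borel_measurable lborel"
    unfolding set_integrable_def by auto
  have "(\<integral>\<^sup>+s. ennreal (f s) * indicator {0..t} s \<partial>lborel)
      = (\<integral>\<^sup>+s. ennreal (norm (indicator {0..t} s *\<^sub>R f s)) \<partial>lborel)"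
    by (intro nn_integral_cong) (auto simp: f0 split: split_indicator)
  also have "\<dots> < \<infinity>" using si unfolding set_integrable_def by (simp add: integrable_iff_bounded)
  finally show ?thesis using nn_integral_interval_eq_integral(2)[OF m f0] by simp
qed

lemma le_exp_square: "(q::real) \<le> exp (q\<^sup>2)"
proof -
  have "0 \<le> q\<^sup>2 - 2 * q + 1" "0 \<le> q\<^sup>2"
    using zero_le_power2[of "q - 1"] by (simp_all add: power2_diff)
  then have "q \<le> 1 + q\<^sup>2" by linarith
  also have "\<dots> \<le> exp (q\<^sup>2)" by (rule exp_ge_add_one_self)
  finally show ?thesis .
qed

lemma mult_exp_neg_square_le:
  fixes r s :: real assumes s: "s > 0"
  shows "r * exp (- r\<^sup>2 / (4 * s)) \<le> 2 * sqrt s"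
proof -
  define q where "q = r / (2 * sqrt s)"
  have r: "r = 2 * sqrt s * q" using s unfolding q_def by simp
  have "r\<^sup>2 / (4 * s) = q\<^sup>2" using s unfolding r by (simp add: power2_eq_square field_simps)
  then have "r * exp (- r\<^sup>2 / (4 * s)) = 2 * sqrt s * (q * exp (- q\<^sup>2))"
    by (simp add: r)
  also have "q * exp (- q\<^sup>2) \<le> 1"
    using le_exp_square[of q] by (simp add: exp_minus field_simps)
  finally show ?thesis using s by (simp add: mult_left_le)
qed

definition gauss_moment_const :: "nat \<Rightarrow> real" where
  "gauss_moment_const n = 2 * 2 powr (real n / 2)"

lemma gauss_moment_const_pos: "gauss_moment_const n > 0"
  unfolding gauss_moment_const_def by simp

lemma gauss_density_mult_norm_le:
  fixes y :: "real^'d::finite" and s :: real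
  assumes s: "s > 0"
  shows "gauss_density s y * norm y \<le> gauss_moment_const CARD('d) * sqrt s * gauss_density (2 * s) y"
proof -
  define e where "e = - real CARD('d) / 2"
  define r where "r = norm y"
  have p: "(2 * pi * s) powr e = 2 powr (- e) * (2 * pi * (2 * s)) powr e"
  proof -
    have "(2 * pi * (2 * s)) powr e = 2 powr e * (2 * pi * s) powr e"
      using s by (simp add: powr_mult[symmetric] mult_ac)
    then show ?thesis by (simp add: powr_minus field_simps)
  qed
  have ex: "exp (- r\<^sup>2 / (2 * s)) = exp (- r\<^sup>2 / (4 * s)) * exp (- r\<^sup>2 / (4 * s))"
    by (simp add: exp_add[symmetric] field_simps)
  have "gauss_density s y * norm y
      = 2 powr (- e) * (2 * pi * (2 * s)) powr e * exp (- r\<^sup>2 / (4 * s)) * (r * exp (- r\<^sup>2 / (4 * s)))"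
    unfolding gauss_density_def e_def[symmetric] r_def[symmetric] p ex by (simp add: mult_ac)
  also have "\<dots> \<le> 2 powr (- e) * (2 * pi * (2 * s)) powr e * exp (- r\<^sup>2 / (4 * s)) * (2 * sqrt s)"
    by (rule mult_left_mono[OF mult_exp_neg_square_le[OF s]]) simp
  also have "\<dots> = gauss_moment_const CARD('d) * sqrt s * gauss_density (2 * s) y"
    unfolding gauss_density_def gauss_moment_const_def e_def r_def by (simp add: mult_ac)
  finally show ?thesis .
qed

lemma continuous_imp_uniform_on_cball:
  fixes \<phi> :: "'a::euclidean_space \<Rightarrow> real"
  assumes c: "continuous_on UNIV \<phi>" and e: "e > 0"
  obtains d where "d > 0"
    and "\<And>z z'. norm z \<le> B \<Longrightarrow> norm z' \<le> B \<Longrightarrow> dist z' z < d \<Longrightarrow> \<bar>\<phi> z' - \<phi> z\<bar> < e"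
proof -
  have "uniformly_continuous_on (cball 0 B) \<phi>"
    by (rule compact_uniformly_continuous[OF continuous_on_subset[OF c]]) auto
  with e that show ?thesis unfolding uniformly_continuous_on_def by (auto simp: dist_real_def)
qed

lemma ceiling_grid_approx:
  fixes s :: real
  shows "s \<le> real_of_int \<lceil>(real n + 1) * s\<rceil> / (real n + 1)"
    and "(\<lambda>n. real_of_int \<lceil>(real n + 1) * s\<rceil> / (real n + 1)) \<longlonglongrightarrow> s"
proof -
  show lower: "s \<le> real_of_int \<lceil>(real n + 1) * s\<rceil> / (real n + 1)" for n
    using le_of_int_ceiling[of "(real n + 1) * s"] by (simp add: pos_le_divide_eq mult.commute)
  have "real_of_int \<lceil>(real n + 1) * s\<rceil> / (real n + 1) \<le> s + inverse (real (Suc n))" for n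
  proof -
    have "real_of_int \<lceil>(real n + 1) * s\<rceil> / (real n + 1) \<le> ((real n + 1) * s + 1) / (real n + 1)"
      by (intro divide_right_mono of_int_ceiling_le_add_one) simp
    then show ?thesis by (simp add: field_simps)
  qed
  then show "(\<lambda>n. real_of_int \<lceil>(real n + 1) * s\<rceil> / (real n + 1)) \<longlonglongrightarrow> s"
    by (intro tendsto_sandwich[OF _ _ tendsto_const LIMSEQ_inverse_real_of_nat_add])
      (use lower in auto)
qed

definition continuous_bounded_by :: "('b::topological_space \<Rightarrow> real) \<Rightarrow> real \<Rightarrow> bool" where
  "continuous_bounded_by \<phi> R \<longleftrightarrow> continuous_on UNIV \<phi> \<and> (\<forall>z. \<bar>\<phi> z\<bar> \<le> R)"

lemma continuous_bounded_by_nonneg: "continuous_bounded_by \<phi> R \<Longrightarrow> R \<ge> 0"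
  unfolding continuous_bounded_by_def by (metis abs_ge_zero order_trans)

lemma continuous_bounded_by_continuous: "continuous_bounded_by \<phi> R \<Longrightarrow> continuous_on UNIV \<phi>"
  and continuous_bounded_by_bound: "continuous_bounded_by \<phi> R \<Longrightarrow> \<bar>\<phi> z\<bar> \<le> R"
  unfolding continuous_bounded_by_def by simp_all

lemma continuous_bounded_by_mono: "continuous_bounded_by \<phi> R \<Longrightarrow> R \<le> R' \<Longrightarrow> continuous_bounded_by \<phi> R'"
  unfolding continuous_bounded_by_def by (auto intro: order_trans)

lemma continuous_bounded_by_const: "\<bar>c\<bar> \<le> R \<Longrightarrow> continuous_bounded_by (\<lambda>_. c) R"
  unfolding continuous_bounded_by_def by simp

lemma abs_diff_le_SUP_cball:
  fixes \<phi>1 \<phi>2 :: "'b::real_normed_vector \<Rightarrow> real"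
  assumes "continuous_bounded_by \<phi>1 R" and "continuous_bounded_by \<phi>2 R" and "norm z \<le> r"
  shows "\<bar>\<phi>1 z - \<phi>2 z\<bar> \<le> (SUP y\<in>cball 0 r. \<bar>\<phi>1 y - \<phi>2 y\<bar>)"
proof -
  have "\<bar>\<phi>1 y - \<phi>2 y\<bar> \<le> 2 * R" for y
    using continuous_bounded_by_bound[OF assms(1), of y] continuous_bounded_by_bound[OF assms(2), of y] by arith
  then show ?thesis using assms(3) by (intro cSUP_upper bdd_aboveI2) auto
qed

lemma bcontfun_imp_continuous_bounded_by:
  assumes "\<phi> \<in> bcontfun" shows "continuous_bounded_by \<phi> (sup_norm \<phi>)"
proof -
  from assms have c: "continuous_on UNIV \<phi>" and "bounded (range \<phi>)" unfolding bcontfun_def by auto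
  then obtain B where B: "\<And>z. norm (\<phi> z) \<le> B" unfolding bounded_pos by auto
  have "\<bar>\<phi> z\<bar> \<le> sup_norm \<phi>" for z
    unfolding sup_norm_def by (rule cSUP_upper) (use B in \<open>auto intro!: bdd_aboveI2\<close>)
  with c show ?thesis unfolding continuous_bounded_by_def by auto
qed

context prob_space
begin

lemma prob_ge_le_nn_integral_div:
  fixes f :: "'a \<Rightarrow> real"
  assumes f: "f \<in> borel_measurable M" and K: "K > 0"
    and c: "(\<integral>\<^sup>+\<omega>. ennreal (f \<omega>) \<partial>M) \<le> ennreal c" and c0: "c \<ge> 0"
  shows "prob {\<omega>\<in>space M. K \<le> f \<omega>} \<le> c / K"
proof -
  have "1 \<le> ennreal (1 / K) * ennreal v \<longleftrightarrow> K \<le> v" for v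
  proof (cases "v \<ge> 0")
    case True
    then have "ennreal (1 / K) * ennreal v = ennreal (v / K)" using K by (simp add: ennreal_mult[symmetric])
    then show ?thesis using K True by (simp add: ennreal_1[symmetric] del: ennreal_1)
  qed (use K in \<open>simp add: ennreal_neg\<close>)
  then have "{\<omega>\<in>space M. K \<le> f \<omega>} = {\<omega>\<in>space M. 1 \<le> ennreal (1 / K) * ennreal (f \<omega>)}"
    by simp
  also have "emeasure M \<dots> \<le> ennreal (1 / K) * (\<integral>\<^sup>+\<omega>. ennreal (f \<omega>) * indicator (space M) \<omega> \<partial>M)"
    by (rule nn_integral_Markov_inequality) (use f in auto)
  also have "(\<integral>\<^sup>+\<omega>. ennreal (f \<omega>) * indicator (space M) \<omega> \<partial>M) = (\<integral>\<^sup>+\<omega>. ennreal (f \<omega>) \<partial>M)"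
    by (intro nn_integral_cong) simp
  also have "ennreal (1 / K) * \<dots> \<le> ennreal (1 / K) * ennreal c" by (intro mult_left_mono c) simp
  also have "\<dots> = ennreal (c / K)" using K c0 by (simp add: ennreal_mult[symmetric])
  finally show ?thesis using K c0 by (simp add: emeasure_eq_measure)
qed

lemma abs_integral_diff_le:
  fixes f1 f2 :: "'a \<Rightarrow> real"
  assumes m1: "f1 \<in> borel_measurable M" and m2: "f2 \<in> borel_measurable M"
    and b1: "\<And>\<omega>. \<omega> \<in> space M \<Longrightarrow> \<bar>f1 \<omega>\<bar> \<le> R" and b2: "\<And>\<omega>. \<omega> \<in> space M \<Longrightarrow> \<bar>f2 \<omega>\<bar> \<le> R"
    and B: "B \<in> sets M" and close: "AE \<omega> in M. \<omega> \<notin> B \<longrightarrow> \<bar>f1 \<omega> - f2 \<omega>\<bar> \<le> \<eta>"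
    and \<eta>: "\<eta> \<ge> 0"
  shows "\<bar>(\<integral>\<omega>. f1 \<omega> \<partial>M) - (\<integral>\<omega>. f2 \<omega> \<partial>M)\<bar> \<le> \<eta> + 2 * R * prob B"
proof -
  have i1: "integrable M f1" by (rule integrable_const_bound[of _ R]) (use b1 m1 in auto)
  have i2: "integrable M f2" by (rule integrable_const_bound[of _ R]) (use b2 m2 in auto)
  have iB: "integrable M (\<lambda>\<omega>. \<eta> + 2 * R * indicator B \<omega>)"
    using B by (intro Bochner_Integration.integrable_add integrable_mult_right integrable_real_indicator)
      (auto simp: less_top[symmetric])
  have "\<bar>(\<integral>\<omega>. f1 \<omega> \<partial>M) - (\<integral>\<omega>. f2 \<omega> \<partial>M)\<bar> \<le> (\<integral>\<omega>. \<bar>f1 \<omega> - f2 \<omega>\<bar> \<partial>M)"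
    using integral_abs_bound[of M "\<lambda>\<omega>. f1 \<omega> - f2 \<omega>"] i1 i2 by simp
  also have "\<dots> \<le> (\<integral>\<omega>. \<eta> + 2 * R * indicator B \<omega> \<partial>M)"
  proof (rule integral_mono_AE[OF _ iB])
    show "integrable M (\<lambda>\<omega>. \<bar>f1 \<omega> - f2 \<omega>\<bar>)" using i1 i2 by auto
    show "AE \<omega> in M. \<bar>f1 \<omega> - f2 \<omega>\<bar> \<le> \<eta> + 2 * R * indicator B \<omega>"
      using close AE_space
    proof eventually_elim
      case (elim \<omega>)
      then show ?case using b1[of \<omega>] b2[of \<omega>] \<eta> by (cases "\<omega> \<in> B") auto
    qed
  qed
  also have "\<dots> = \<eta> + 2 * R * prob B"
    using B by (simp add: Bochner_Integration.integral_add[OF _ integrable_mult_right] prob_space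
      less_top[symmetric])
  finally show ?thesis .
qed

end

section \<open>Brownian motion\<close>

locale filtered_brownian_motion = prob_space M
  for M :: "'a measure" +
  fixes F :: "real \<Rightarrow> 'a measure" and W :: "real \<Rightarrow> 'a \<Rightarrow> real^'d::finite"
  assumes usual: "usual_filtration M F"
    and brownian: "brownian_motion M F W"
begin

lemma space_F: "t \<ge> 0 \<Longrightarrow> space (F t) = space M"
  and sets_F: "t \<ge> 0 \<Longrightarrow> sets (F t) \<subseteq> sets M"
  using usual[unfolded usual_filtration_def, THEN conjunct1] by simp_all

lemma subalgebra_F: "t \<ge> 0 \<Longrightarrow> subalgebra M (F t)"
  unfolding subalgebra_def using space_F sets_F by simp

abbreviation gaussian :: "real \<Rightarrow> (real^'d) measure" where
  "gaussian s \<equiv> density lborel (\<lambda>y. ennreal (gauss_density s y))"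

lemma W_zero: "\<omega> \<in> space M \<Longrightarrow> W 0 \<omega> = 0"
  and W_continuous: "\<omega> \<in> space M \<Longrightarrow> continuous_on {0..} (\<lambda>t. W t \<omega>)"
  and W_measurable_F: "t \<ge> 0 \<Longrightarrow> W t \<in> borel_measurable (F t)"
  and W_increment_law: "0 \<le> s \<Longrightarrow> s < t \<Longrightarrow> B \<in> sets (F s) \<Longrightarrow> D \<in> sets borel \<Longrightarrow>
    prob (B \<inter> {\<omega>\<in>space M. W t \<omega> - W s \<omega> \<in> D}) = prob B * measure (gaussian (t - s)) D"
  using brownian unfolding brownian_motion_def by auto

lemma W_measurable: "t \<ge> 0 \<Longrightarrow> W t \<in> borel_measurable M"
  using measurable_from_subalg[OF subalgebra_F W_measurable_F] .

lemma prob_W_in: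
  assumes "s > 0" and "D \<in> sets borel"
  shows "prob {\<omega>\<in>space M. W s \<omega> \<in> D} = measure (gaussian s) D"
proof -
  have "space M \<in> sets (F 0)" using space_F[of 0] by (metis order_refl sets.top)
  moreover have "space M \<inter> {\<omega>\<in>space M. W s \<omega> - W 0 \<omega> \<in> D} = {\<omega>\<in>space M. W s \<omega> \<in> D}"
    using W_zero by auto
  ultimately show ?thesis using W_increment_law[of 0 s "space M" D] assms prob_space by simp
qed

lemma emeasure_gaussian_UNIV:
  assumes "s > 0" shows "emeasure (gaussian s) UNIV = 1"
proof -
  have m: "measure (gaussian s) UNIV = 1" using prob_W_in[OF assms, of UNIV] prob_space by simp
  show ?thesis
  proof (cases "emeasure (gaussian s) UNIV = \<infinity>")
    case True
    then show ?thesis using m by (simp add: measure_def)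
  qed (use m in \<open>simp add: emeasure_eq_ennreal_measure\<close>)
qed

lemma distr_W: "s > 0 \<Longrightarrow> distr M borel (W s) = gaussian s"
proof (rule measure_eqI)
  fix D assume s: "s > 0" and "D \<in> sets (distr M borel (W s))"
  then have D: "D \<in> sets borel" by simp
  have "emeasure (gaussian s) D \<le> emeasure (gaussian s) UNIV"
    by (rule emeasure_mono) (use D in auto)
  then have fin: "emeasure (gaussian s) D \<noteq> \<infinity>"
    using emeasure_gaussian_UNIV[OF s] by (auto simp: top_unique)
  have "emeasure (distr M borel (W s)) D = ennreal (prob {\<omega>\<in>space M. W s \<omega> \<in> D})"
    using W_measurable s D by (simp add: emeasure_distr emeasure_eq_measure vimage_def Int_def conj_commute)
  also have "\<dots> = emeasure (gaussian s) D"
    using prob_W_in[OF s D] fin by (simp add: emeasure_eq_ennreal_measure)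
  finally show "emeasure (distr M borel (W s)) D = emeasure (gaussian s) D" .
qed simp

lemma nn_integral_norm_W_le:
  assumes "s \<ge> 0"
  shows "(\<integral>\<^sup>+\<omega>. ennreal (norm (W s \<omega>)) \<partial>M) \<le> ennreal (gauss_moment_const CARD('d) * sqrt s)"
proof (cases "s = 0")
  case True
  then show ?thesis by (simp add: W_zero nn_integral_cong[of M _ "\<lambda>_. 0"])
next
  case False
  with assms have s: "s > 0" by simp
  have "(\<integral>\<^sup>+\<omega>. ennreal (norm (W s \<omega>)) \<partial>M) = (\<integral>\<^sup>+y. ennreal (norm y) \<partial>gaussian s)"
    using nn_integral_distr[of "W s" M borel "\<lambda>y. ennreal (norm y)"] W_measurable s
    by (simp add: distr_W)
  also have "\<dots> = (\<integral>\<^sup>+(y::real^'d). ennreal (gauss_density s y) * ennreal (norm y) \<partial>lborel)"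
    by (rule nn_integral_density) (auto simp: gauss_density_def)
  also have "\<dots> \<le> (\<integral>\<^sup>+(y::real^'d). ennreal (gauss_moment_const CARD('d) * sqrt s)
      * ennreal (gauss_density (2 * s) y) \<partial>lborel)"
  proof (rule nn_integral_mono)
    fix y :: "real^'d"
    have "ennreal (gauss_density s y) * ennreal (norm y) = ennreal (gauss_density s y * norm y)"
      by (simp add: ennreal_mult gauss_density_def)
    also have "\<dots> \<le> ennreal (gauss_moment_const CARD('d) * sqrt s * gauss_density (2 * s) y)"
      by (intro ennreal_leI gauss_density_mult_norm_le s)
    also have "\<dots> = ennreal (gauss_moment_const CARD('d) * sqrt s) * ennreal (gauss_density (2 * s) y)"
      by (rule ennreal_mult) (use gauss_moment_const_pos[of "CARD('d)"] s in \<open>auto simp: gauss_density_def\<close>)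
    finally show "ennreal (gauss_density s y) * ennreal (norm y)
      \<le> ennreal (gauss_moment_const CARD('d) * sqrt s) * ennreal (gauss_density (2 * s) y)" .
  qed
  also have "\<dots> = ennreal (gauss_moment_const CARD('d) * sqrt s) * emeasure (gaussian (2 * s)) UNIV"
    by (simp add: nn_integral_cmult emeasure_density gauss_density_def)
  finally show ?thesis using emeasure_gaussian_UNIV[of "2 * s"] s by simp
qed

lemma W_max_measurable_pair: "(\<lambda>x. W (max 0 (snd x)) (fst x)) \<in> borel_measurable (M \<Otimes>\<^sub>M lborel)"
proof (rule borel_measurable_LIMSEQ_metric)
  define p where "p n s = real_of_int \<lceil>(real n + 1) * max 0 s\<rceil> / (real n + 1)" for n :: nat and s :: real
  show "(\<lambda>x. W (max 0 (p n (snd x))) (fst x)) \<in> borel_measurable (M \<Otimes>\<^sub>M lborel)" for n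
  proof -
    have "(\<lambda>x. (\<lambda>i x. W (max 0 (real_of_int i / (real n + 1))) (fst x)) \<lceil>(real n + 1) * max 0 (snd x)\<rceil> x)
        \<in> borel_measurable (M \<Otimes>\<^sub>M lborel)"
    proof (rule measurable_compose_countable'[where I="UNIV::int set"])
      show "(\<lambda>x. W (max 0 (real_of_int i / (real n + 1))) (fst x)) \<in> borel_measurable (M \<Otimes>\<^sub>M lborel)" for i
        by (rule measurable_compose[OF measurable_fst W_measurable]) simp
      show "(\<lambda>x. \<lceil>(real n + 1) * max 0 (snd x)\<rceil>) \<in> measurable (M \<Otimes>\<^sub>M lborel) (count_space UNIV)"
        by (rule measurable_compose[OF _ measurable_real_ceiling]) measurable
    qed simp
    then show ?thesis unfolding p_def by simp
  qed
  fix x :: "'a \<times> real" assume "x \<in> space (M \<Otimes>\<^sub>M lborel)"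
  then have x: "fst x \<in> space M" by (auto simp: space_pair_measure)
  have above: "max 0 (snd x) \<le> p n (snd x)" for n
    unfolding p_def by (rule ceiling_grid_approx(1))
  have "(\<lambda>n. p n (snd x)) \<longlonglongrightarrow> max 0 (snd x)"
    unfolding p_def by (rule ceiling_grid_approx(2))
  from tendsto_max[OF tendsto_const this, of 0]
  have "(\<lambda>n. max 0 (p n (snd x))) \<longlonglongrightarrow> max 0 (snd x)" by simp
  then show "(\<lambda>n. W (max 0 (p n (snd x))) (fst x)) \<longlonglongrightarrow> W (max 0 (snd x)) (fst x)"
    by (rule continuous_on_tendsto_compose[OF W_continuous[OF x]]) auto
qed

definition W_norm_integral :: "real \<Rightarrow> 'a \<Rightarrow> ennreal" where
  "W_norm_integral t \<omega> = (\<integral>\<^sup>+s. ennreal (norm (W s \<omega>)) * indicator {0..t} s \<partial>lborel)"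

lemma W_norm_integral_max:
  "W_norm_integral t \<omega> = (\<integral>\<^sup>+s. ennreal (norm (W (max 0 s) \<omega>)) * indicator {0..t} s \<partial>lborel)"
  unfolding W_norm_integral_def by (intro nn_integral_cong) (auto split: split_indicator)

lemma W_norm_indicator_measurable_pair:
  "(\<lambda>(\<omega>, s). ennreal (norm (W (max 0 s) \<omega>)) * indicator {0..t} s) \<in> borel_measurable (M \<Otimes>\<^sub>M lborel)"
proof -
  have "(\<lambda>x. ennreal (norm (W (max 0 (snd x)) (fst x))) * indicator {0..t} (snd x))
      \<in> borel_measurable (M \<Otimes>\<^sub>M lborel)"
    using W_max_measurable_pair by measurable
  then show ?thesis by (simp add: case_prod_beta')
qed

lemma W_norm_integral_measurable: "W_norm_integral t \<in> borel_measurable M"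
  unfolding W_norm_integral_max[abs_def]
  by (rule lborel.borel_measurable_nn_integral[OF W_norm_indicator_measurable_pair])

lemma W_norm_integral_eq_integral:
  "\<omega> \<in> space M \<Longrightarrow> W_norm_integral t \<omega> = ennreal (integral {0..t} (\<lambda>r. norm (W r \<omega>)))"
  unfolding W_norm_integral_def
  by (intro nn_integral_interval_eq_integral_continuous continuous_intros
      continuous_on_subset[OF W_continuous]) auto

lemma nn_integral_W_norm_integral_le:
  assumes t: "t \<ge> 0"
  shows "(\<integral>\<^sup>+\<omega>. W_norm_integral t \<omega> \<partial>M) \<le> ennreal (gauss_moment_const CARD('d) * sqrt t * t)"
proof -
  interpret pair_sigma_finite M lborel
    by (intro pair_sigma_finite.intro sigma_finite_measure_axioms lborel.sigma_finite_measure_axioms)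
  have "(\<integral>\<^sup>+\<omega>. W_norm_integral t \<omega> \<partial>M)
      = (\<integral>\<^sup>+s. (\<integral>\<^sup>+\<omega>. ennreal (norm (W (max 0 s) \<omega>)) * indicator {0..t} s \<partial>M) \<partial>lborel)"
    unfolding W_norm_integral_max by (rule Fubini'[symmetric, OF W_norm_indicator_measurable_pair])
  also have "\<dots> \<le> (\<integral>\<^sup>+s. ennreal (gauss_moment_const CARD('d) * sqrt t) * indicator {0..t} s \<partial>lborel)"
  proof (intro nn_integral_mono)
    fix s :: real
    have "(\<integral>\<^sup>+\<omega>. ennreal (norm (W s \<omega>)) \<partial>M) \<le> ennreal (gauss_moment_const CARD('d) * sqrt t)"
      if "s \<in> {0..t}"
    proof -
      have "gauss_moment_const CARD('d) * sqrt s \<le> gauss_moment_const CARD('d) * sqrt t"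
        using that gauss_moment_const_pos[of "CARD('d)"] by (intro mult_left_mono) auto
      then show ?thesis using nn_integral_norm_W_le[of s] that
        by (auto intro: order_trans ennreal_leI)
    qed
    then show "(\<integral>\<^sup>+\<omega>. ennreal (norm (W (max 0 s) \<omega>)) * indicator {0..t} s \<partial>M)
        \<le> ennreal (gauss_moment_const CARD('d) * sqrt t) * indicator {0..t} s"
      by (cases "s \<in> {0..t}") (simp_all add: nn_integral_multc)
  qed
  also have "\<dots> = ennreal (gauss_moment_const CARD('d) * sqrt t * t)"
    using t gauss_moment_const_pos[of "CARD('d)"] by (simp add: nn_integral_cmult_indicator ennreal_mult)
  finally show ?thesis .
qed

end

section \<open>The controlled diffusion\<close>

text \<open>The pathwise bound of \<open>integral_equation_deviation_le\<close> in expectation, using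
  \<open>E |W t| \<le> \<kappa> sqrt t\<close> and \<open>E \<integral>\<^sub>0\<^sup>t |\<alpha>| \<le> a\<close>.\<close>
definition deviation_bound :: "real \<Rightarrow> real \<Rightarrow> real \<Rightarrow> real \<Rightarrow> real \<Rightarrow> real \<Rightarrow> real" where
  "deviation_bound \<sigma> C \<kappa> t n a = \<sigma> * \<kappa> * sqrt t + C * t + C * a
     + C * exp (C * t) * (t * (n + C * t) + C * t * a + \<sigma> * (\<kappa> * sqrt t * t))"

lemma deviation_bound_nonneg:
  "\<sigma> \<ge> 0 \<Longrightarrow> C \<ge> 0 \<Longrightarrow> \<kappa> \<ge> 0 \<Longrightarrow> t \<ge> 0 \<Longrightarrow> n \<ge> 0 \<Longrightarrow> a \<ge> 0 \<Longrightarrow>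
    deviation_bound \<sigma> C \<kappa> t n a \<ge> 0"
  unfolding deviation_bound_def by (intro add_nonneg_nonneg mult_nonneg_nonneg) auto

lemma deviation_bound_mono:
  assumes "\<sigma> \<ge> 0" "C \<ge> 0" "\<kappa> \<ge> 0" "0 \<le> t" "t \<le> T" "0 \<le> n" "n \<le> n'" "0 \<le> a" "a \<le> a'"
  shows "deviation_bound \<sigma> C \<kappa> t n a \<le> deviation_bound \<sigma> C \<kappa> T n' a'"
proof -
  have "sqrt t \<le> sqrt T" "C * t \<le> C * T" "exp (C * t) \<le> exp (C * T)"
    using assms by (auto intro: mult_left_mono)
  moreover have "t * (n + C * t) \<le> T * (n' + C * T)" "C * t * a \<le> C * T * a'"
    using assms \<open>C * t \<le> C * T\<close> by (auto intro!: mult_mono)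
  moreover have "\<kappa> * sqrt t * t \<le> \<kappa> * sqrt T * T"
    using assms \<open>sqrt t \<le> sqrt T\<close> by (auto intro!: mult_mono)
  ultimately show ?thesis
    unfolding deviation_bound_def using assms
    by (intro add_mono mult_mono mult_left_mono) (auto intro!: add_nonneg_nonneg mult_nonneg_nonneg)
qed

locale controlled_sde = filtered_brownian_motion M F W
  for M :: "'a measure" and F :: "real \<Rightarrow> 'a measure" and W :: "real \<Rightarrow> 'a \<Rightarrow> real^'d::finite" +
  fixes \<sigma> :: real and A :: "(real^'m::finite) set" and C :: real
    and b :: "real^'d \<Rightarrow> real^'m \<Rightarrow> real^'d" and g :: "real^'m \<Rightarrow> real"
    and Xs :: "('a \<Rightarrow> real \<Rightarrow> real^'m) \<Rightarrow> real^'d \<Rightarrow> real \<Rightarrow> 'a \<Rightarrow> real^'d"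
  assumes sigma_nonneg: "\<sigma> \<ge> 0" and zero_in_A: "0 \<in> A" and C_nonneg: "C \<ge> 0"
    and b_lipschitz: "\<And>x1 x2 a. a \<in> A \<Longrightarrow> norm (b x1 a - b x2 a) \<le> C * norm (x1 - x2)"
    and b_growth: "\<And>x a. a \<in> A \<Longrightarrow> norm (b x a) \<le> C * (1 + norm x + norm a)"
    and g_measurable: "g \<in> borel_measurable (restrict_space borel A)"
    and g_nonneg: "\<And>a. a \<in> A \<Longrightarrow> g a \<ge> 0"
    and g_zero: "g 0 = 0"
    and g_conj_bdd: "\<And>y. y \<ge> 0 \<Longrightarrow> bdd_above ((\<lambda>a. norm a * y - g a) ` A)"
    and solution: "\<And>\<alpha> x. admissible M F A \<alpha> \<Longrightarrow> strong_solution M F W b \<sigma> \<alpha> x (Xs \<alpha> x)"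
begin

abbreviation adm :: "('a \<Rightarrow> real \<Rightarrow> real^'m) \<Rightarrow> bool" where
  "adm \<alpha> \<equiv> admissible M F A \<alpha>"

lemma admissible_in_A: "adm \<alpha> \<Longrightarrow> \<omega> \<in> space M \<Longrightarrow> s \<ge> 0 \<Longrightarrow> \<alpha> \<omega> s \<in> A"
  unfolding admissible_def by blast

lemma admissible_zero: "adm (\<lambda>\<omega> s. 0)"
  unfolding admissible_def progressive_def using zero_in_A by simp

lemma admissible_comp_measurable:
  fixes h :: "real^'m \<Rightarrow> 'z::topological_space"
  assumes a: "adm \<alpha>" and t: "t \<ge> 0" and h: "h \<in> borel_measurable (restrict_space borel A)"
  shows "(\<lambda>(\<omega>, s). h (\<alpha> \<omega> s)) \<in> borel_measurable (F t \<Otimes>\<^sub>M restrict_space lborel {0..t})"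
proof -
  have "(\<lambda>(\<omega>, s). \<alpha> \<omega> s) \<in> borel_measurable (F t \<Otimes>\<^sub>M restrict_space borel {0..t})"
    using a t unfolding admissible_def progressive_def by simp
  also have "borel_measurable (F t \<Otimes>\<^sub>M restrict_space borel {0..t})
      = borel_measurable (F t \<Otimes>\<^sub>M restrict_space lborel {0..t})"
    by (intro measurable_cong_sets sets_pair_measure_cong sets_restrict_space_cong) simp_all
  finally have m: "(\<lambda>(\<omega>, s). \<alpha> \<omega> s) \<in> borel_measurable (F t \<Otimes>\<^sub>M restrict_space lborel {0..t})" .
  have "(\<lambda>(\<omega>, s). \<alpha> \<omega> s) \<in> measurable (F t \<Otimes>\<^sub>M restrict_space lborel {0..t}) (restrict_space borel A)"
    by (rule measurable_restrict_space2[OF _ m])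
      (use admissible_in_A[OF a] space_F[OF t] in \<open>auto simp: space_pair_measure space_restrict_space\<close>)
  from measurable_compose[OF this h] show ?thesis by (simp add: case_prod_beta')
qed

lemma admissible_nn_integral_measurable:
  assumes a: "adm \<alpha>" and t: "t \<ge> 0" and h: "h \<in> borel_measurable (restrict_space borel A)"
  shows "(\<lambda>\<omega>. \<integral>\<^sup>+s. ennreal (h (\<alpha> \<omega> s)) * indicator {0..t} s \<partial>lborel) \<in> borel_measurable M"
proof -
  interpret R: sigma_finite_measure "restrict_space lborel {0..t::real}"
    by (intro sigma_finite_measure_restrict_space lborel.sigma_finite_measure_axioms) simp
  have "(\<lambda>x. ennreal (h x)) \<in> borel_measurable (restrict_space borel A)"
    using h by measurable
  then have "(\<lambda>\<omega>. \<integral>\<^sup>+s. ennreal (h (\<alpha> \<omega> s)) \<partial>restrict_space lborel {0..t}) \<in> borel_measurable (F t)"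
    by (intro R.borel_measurable_nn_integral admissible_comp_measurable[OF a t])
  then have "(\<lambda>\<omega>. \<integral>\<^sup>+s. ennreal (h (\<alpha> \<omega> s)) \<partial>restrict_space lborel {0..t}) \<in> borel_measurable M"
    by (rule measurable_from_subalg[OF subalgebra_F[OF t]])
  then show ?thesis by (simp add: nn_integral_restrict_space)
qed

lemma admissible_path_measurable:
  fixes h :: "real^'m \<Rightarrow> real"
  assumes a: "adm \<alpha>" and t: "t \<ge> 0" and h: "h \<in> borel_measurable (restrict_space borel A)"
    and \<omega>: "\<omega> \<in> space M"
  shows "(\<lambda>s. indicator {0..t} s *\<^sub>R h (\<alpha> \<omega> s)) \<in> borel_measurable lborel"
proof -
  have "(\<lambda>s. (\<lambda>(\<omega>, s). h (\<alpha> \<omega> s)) (\<omega>, s)) \<in> borel_measurable (restrict_space lborel {0..t})"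
    by (rule measurable_Pair2[OF admissible_comp_measurable[OF a t h]]) (simp add: space_F[OF t] \<omega>)
  then show ?thesis by (subst (asm) borel_measurable_restrict_space_iff) auto
qed

lemma norm_measurable_on_A: "(\<lambda>a::real^'m. norm a) \<in> borel_measurable (restrict_space borel A)"
  by (rule measurable_restrict_space1) simp

definition control_norm_integral :: "('a \<Rightarrow> real \<Rightarrow> real^'m) \<Rightarrow> real \<Rightarrow> 'a \<Rightarrow> ennreal" where
  "control_norm_integral \<alpha> t \<omega> = (\<integral>\<^sup>+s. ennreal (norm (\<alpha> \<omega> s)) * indicator {0..t} s \<partial>lborel)"

definition running_cost :: "('a \<Rightarrow> real \<Rightarrow> real^'m) \<Rightarrow> real \<Rightarrow> 'a \<Rightarrow> ennreal" where
  "running_cost \<alpha> t \<omega> = (\<integral>\<^sup>+s. ennreal (g (\<alpha> \<omega> s)) * indicator {0..t} s \<partial>lborel)"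

abbreviation expected_cost :: "('a \<Rightarrow> real \<Rightarrow> real^'m) \<Rightarrow> real \<Rightarrow> ennreal" where
  "expected_cost \<alpha> t \<equiv> (\<integral>\<^sup>+\<omega>. running_cost \<alpha> t \<omega> \<partial>M)"

lemma control_norm_integral_measurable: "adm \<alpha> \<Longrightarrow> t \<ge> 0 \<Longrightarrow> control_norm_integral \<alpha> t \<in> borel_measurable M"
  unfolding control_norm_integral_def[abs_def]
  by (rule admissible_nn_integral_measurable[OF _ _ norm_measurable_on_A])

lemma running_cost_measurable: "adm \<alpha> \<Longrightarrow> t \<ge> 0 \<Longrightarrow> running_cost \<alpha> t \<in> borel_measurable M"
  unfolding running_cost_def[abs_def] by (rule admissible_nn_integral_measurable[OF _ _ g_measurable])

lemma expected_cost_zero: "expected_cost (\<lambda>\<omega> s. 0) t = 0"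
  unfolding running_cost_def using g_zero by simp

lemma AE_control_norm_integral_finite:
  assumes a: "adm \<alpha>" and t: "t \<ge> 0"
  shows "AE \<omega> in M. control_norm_integral \<alpha> t \<omega> \<noteq> \<infinity>"
  using a t unfolding admissible_def
  by (intro nn_integral_PInf_AE control_norm_integral_measurable[OF a t])
    (auto simp: control_norm_integral_def[abs_def])

lemma control_norm_integral_eq_integral:
  assumes a: "adm \<alpha>" and t: "t \<ge> 0" and \<omega>: "\<omega> \<in> space M"
    and fin: "control_norm_integral \<alpha> t \<omega> \<noteq> \<infinity>"
  shows "(\<lambda>r. norm (\<alpha> \<omega> r)) integrable_on {0..t}"
    and "control_norm_integral \<alpha> t \<omega> = ennreal (integral {0..t} (\<lambda>r. norm (\<alpha> \<omega> r)))"
  using nn_integral_interval_eq_integral[OF admissible_path_measurable[OF a t norm_measurable_on_A \<omega>]]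
    fin by (simp_all add: control_norm_integral_def less_top)

lemma solution_measurable: "adm \<alpha> \<Longrightarrow> t \<ge> 0 \<Longrightarrow> Xs \<alpha> x t \<in> borel_measurable M"
  using solution[of \<alpha> x] measurable_from_subalg[OF subalgebra_F] unfolding strong_solution_def by blast

lemma AE_solution_integral_equation:
  assumes "adm \<alpha>"
  shows "AE \<omega> in M. continuous_on {0..} (\<lambda>t. Xs \<alpha> x t \<omega>) \<and>
    (\<forall>s\<ge>0. (\<lambda>r. b (Xs \<alpha> x r \<omega>) (\<alpha> \<omega> r)) integrable_on {0..s} \<and>
      Xs \<alpha> x s \<omega> = x + integral {0..s} (\<lambda>r. b (Xs \<alpha> x r \<omega>) (\<alpha> \<omega> r)) + \<sigma> *\<^sub>R W s \<omega>)"
proof -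
  have "AE \<omega> in M. continuous_on {0..} (\<lambda>t. Xs \<alpha> x t \<omega>) \<and>
    (\<forall>t\<ge>0. set_integrable lborel {0..t} (\<lambda>s. b (Xs \<alpha> x s \<omega>) (\<alpha> \<omega> s)) \<and>
      Xs \<alpha> x t \<omega> = x + (\<integral>s\<in>{0..t}. b (Xs \<alpha> x s \<omega>) (\<alpha> \<omega> s) \<partial>lborel) + \<sigma> *\<^sub>R W t \<omega>)"
    using solution[OF assms, of x] unfolding strong_solution_def by (elim conjE)
  then show ?thesis by eventually_elim (simp add: set_borel_integral_eq_integral)
qed

definition deviation_majorant :: "('a \<Rightarrow> real \<Rightarrow> real^'m) \<Rightarrow> real^'d \<Rightarrow> real \<Rightarrow> 'a \<Rightarrow> ennreal" where
  "deviation_majorant \<alpha> x t \<omega> =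
     ennreal (\<sigma> * norm (W t \<omega>)) + ennreal (C * t) + ennreal C * control_norm_integral \<alpha> t \<omega>
     + ennreal (C * exp (C * t)) * (ennreal (t * (norm x + C * t))
        + ennreal (C * t) * control_norm_integral \<alpha> t \<omega> + ennreal \<sigma> * W_norm_integral t \<omega>)"

lemma AE_deviation_le_majorant:
  assumes a: "adm \<alpha>" and t: "t \<ge> 0"
  shows "AE \<omega> in M. ennreal (norm (Xs \<alpha> x t \<omega> - x)) \<le> deviation_majorant \<alpha> x t \<omega>"
  using AE_space AE_solution_integral_equation[OF a, of x] AE_control_norm_integral_finite[OF a t]
proof eventually_elim
  case (elim \<omega>)
  note \<omega> = elim(1) and X = elim(2) and fin = elim(3)
  define a where "a = integral {0..t} (\<lambda>r. norm (\<alpha> \<omega> r))"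
  define i where "i = integral {0..t} (\<lambda>r. norm (W r \<omega>))"
  note \<alpha>_int = control_norm_integral_eq_integral[OF a t \<omega> fin]
  have cW: "continuous_on {0..t} (\<lambda>r. W r \<omega>)"
    by (rule continuous_on_subset[OF W_continuous[OF \<omega>]]) auto
  have a0: "a \<ge> 0" unfolding a_def by (rule integral_nonneg[OF \<alpha>_int(1)]) simp
  have i0: "i \<ge> 0" unfolding i_def
    by (intro integral_nonneg integrable_continuous_real continuous_intros cW) simp
  have "norm (Xs \<alpha> x t \<omega> - x) \<le> \<sigma> * norm (W t \<omega>) + C * t + C * a
     + C * (exp (C * t) * (t * (norm x + C * t + C * a) + \<sigma> * i))"
    unfolding a_def i_def
  proof (rule integral_equation_deviation_le[OF t C_nonneg sigma_nonneg _ cW _ _ _ \<alpha>_int(1)])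
    show "continuous_on {0..t} (\<lambda>s. Xs \<alpha> x s \<omega>)"
      using X by (auto intro: continuous_on_subset)
    show "norm (b (Xs \<alpha> x r \<omega>) (\<alpha> \<omega> r)) \<le> C * (1 + norm (Xs \<alpha> x r \<omega>) + norm (\<alpha> \<omega> r))"
      if "r \<in> {0..t}" for r
      using b_growth admissible_in_A[OF a \<omega>] that by auto
  qed (use X in auto)
  also have "\<dots> = \<sigma> * norm (W t \<omega>) + C * t + C * a
     + C * exp (C * t) * (t * (norm x + C * t) + C * t * a + \<sigma> * i)"
    by (simp add: algebra_simps)
  also have "ennreal \<dots> = deviation_majorant \<alpha> x t \<omega>"
    unfolding deviation_majorant_def \<alpha>_int(2) W_norm_integral_eq_integral[OF \<omega>]
      a_def[symmetric] i_def[symmetric]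
    using sigma_nonneg C_nonneg t a0 i0
    by (simp add: ennreal_plus[symmetric] ennreal_mult[symmetric] del: ennreal_plus)
  finally show ?case by (simp add: ennreal_leI)
qed

lemma nn_integral_deviation_le:
  assumes a: "adm \<alpha>" and t: "t \<ge> 0" and a0: "a \<ge> 0"
    and ctrl: "(\<integral>\<^sup>+\<omega>. control_norm_integral \<alpha> t \<omega> \<partial>M) \<le> ennreal a"
  shows "(\<integral>\<^sup>+\<omega>. ennreal (norm (Xs \<alpha> x t \<omega> - x)) \<partial>M) \<le> ennreal (deviation_bound \<sigma> C (gauss_moment_const CARD('d)) t (norm x) a)"
proof -
  have Am: "control_norm_integral \<alpha> t \<in> borel_measurable M" by (rule control_norm_integral_measurable[OF a t])
  have Wm: "W t \<in> borel_measurable M" by (rule W_measurable[OF t])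
  have "(\<integral>\<^sup>+\<omega>. ennreal (norm (Xs \<alpha> x t \<omega> - x)) \<partial>M) \<le> (\<integral>\<^sup>+\<omega>. deviation_majorant \<alpha> x t \<omega> \<partial>M)"
    by (rule nn_integral_mono_AE[OF AE_deviation_le_majorant[OF a t]])
  also have "\<dots> = (\<integral>\<^sup>+\<omega>. ennreal (\<sigma> * norm (W t \<omega>)) \<partial>M) + ennreal (C * t)
     + ennreal C * (\<integral>\<^sup>+\<omega>. control_norm_integral \<alpha> t \<omega> \<partial>M)
     + ennreal (C * exp (C * t)) * (ennreal (t * (norm x + C * t))
        + ennreal (C * t) * (\<integral>\<^sup>+\<omega>. control_norm_integral \<alpha> t \<omega> \<partial>M)
        + ennreal \<sigma> * (\<integral>\<^sup>+\<omega>. W_norm_integral t \<omega> \<partial>M))"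
    unfolding deviation_majorant_def using Am Wm W_norm_integral_measurable
    by (simp add: nn_integral_add nn_integral_cmult emeasure_space_1)
  also have "(\<integral>\<^sup>+\<omega>. ennreal (\<sigma> * norm (W t \<omega>)) \<partial>M) = ennreal \<sigma> * (\<integral>\<^sup>+\<omega>. ennreal (norm (W t \<omega>)) \<partial>M)"
    using sigma_nonneg Wm by (simp add: ennreal_mult nn_integral_cmult)
  also note nn_integral_norm_W_le[OF t]
  also note ctrl
  also note nn_integral_W_norm_integral_le[OF t]
  also have "ennreal \<sigma> * ennreal (gauss_moment_const CARD('d) * sqrt t) + ennreal (C * t) + ennreal C * ennreal a
     + ennreal (C * exp (C * t)) * (ennreal (t * (norm x + C * t)) + ennreal (C * t) * ennreal a
        + ennreal \<sigma> * ennreal (gauss_moment_const CARD('d) * sqrt t * t))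
    = ennreal (deviation_bound \<sigma> C (gauss_moment_const CARD('d)) t (norm x) a)"
    unfolding deviation_bound_def using sigma_nonneg C_nonneg t a0 gauss_moment_const_pos[of "CARD('d)"]
    by (simp add: ennreal_plus[symmetric] ennreal_mult[symmetric] mult_ac del: ennreal_plus)
  finally show ?thesis by (simp add: mult_left_mono add_mono)
qed
definition g_conj :: "real \<Rightarrow> real" where
  "g_conj y = (SUP a\<in>A. norm a * y - g a)"

lemma g_conj_upper: "y \<ge> 0 \<Longrightarrow> a \<in> A \<Longrightarrow> norm a * y - g a \<le> g_conj y"
  unfolding g_conj_def by (rule cSUP_upper[OF _ g_conj_bdd])

lemma g_conj_nonneg: "y \<ge> 0 \<Longrightarrow> g_conj y \<ge> 0"
  using g_conj_upper[OF _ zero_in_A] g_zero by simp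

text \<open>Young's inequality \<open>|a| \<le> (g a + g_conj y) / y\<close> trades control size for running cost.\<close>
lemma control_norm_integral_le_running_cost:
  assumes a: "adm \<alpha>" and t: "t \<ge> 0" and y: "y > 0" and \<omega>: "\<omega> \<in> space M"
  shows "control_norm_integral \<alpha> t \<omega> \<le> ennreal (1 / y) * running_cost \<alpha> t \<omega> + ennreal (t * g_conj y / y)"
proof -
  have gm: "(\<lambda>s. ennreal (g (\<alpha> \<omega> s)) * indicator {0..t} s) \<in> borel_measurable lborel"
  proof -
    have "(\<lambda>s. ennreal (indicator {0..t} s *\<^sub>R g (\<alpha> \<omega> s))) \<in> borel_measurable lborel"
      using admissible_path_measurable[OF a t g_measurable \<omega>] by measurable
    moreover have "ennreal (indicator {0..t} s *\<^sub>R g (\<alpha> \<omega> s)) = ennreal (g (\<alpha> \<omega> s)) * indicator {0..t} s" for s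
      by (auto split: split_indicator)
    ultimately show ?thesis by simp
  qed
  have "control_norm_integral \<alpha> t \<omega> \<le> (\<integral>\<^sup>+s. ennreal (1 / y) * (ennreal (g (\<alpha> \<omega> s)) * indicator {0..t} s)
      + ennreal (g_conj y / y) * indicator {0..t} s \<partial>lborel)"
    unfolding control_norm_integral_def
  proof (rule nn_integral_mono)
    fix s
    show "ennreal (norm (\<alpha> \<omega> s)) * indicator {0..t} s \<le> ennreal (1 / y) * (ennreal (g (\<alpha> \<omega> s)) * indicator {0..t} s)
      + ennreal (g_conj y / y) * indicator {0..t} s"
    proof (cases "s \<in> {0..t}")
      case True
      then have aA: "\<alpha> \<omega> s \<in> A" using admissible_in_A[OF a \<omega>] by auto
      have "norm (\<alpha> \<omega> s) \<le> 1 / y * g (\<alpha> \<omega> s) + g_conj y / y"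
        using g_conj_upper[OF _ aA, of y] y by (simp add: field_simps)
      then have "ennreal (norm (\<alpha> \<omega> s)) \<le> ennreal (1 / y * g (\<alpha> \<omega> s) + g_conj y / y)" by (rule ennreal_leI)
      also have "\<dots> = ennreal (1 / y) * ennreal (g (\<alpha> \<omega> s)) + ennreal (g_conj y / y)"
        using y g_nonneg[OF aA] g_conj_nonneg[of y] by (simp add: ennreal_mult[symmetric])
      finally show ?thesis using True by simp
    qed simp
  qed
  also have "\<dots> = ennreal (1 / y) * running_cost \<alpha> t \<omega> + ennreal (g_conj y / y) * emeasure lborel {0..t}"
    unfolding running_cost_def using gm by (simp add: nn_integral_add nn_integral_cmult nn_integral_cmult_indicator)
  also have "ennreal (g_conj y / y) * emeasure lborel {0..t} = ennreal (t * g_conj y / y)"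
    using t y g_conj_nonneg[of y] by (simp add: ennreal_mult[symmetric])
  finally show ?thesis .
qed

lemma nn_integral_deviation_le_cost:
  assumes a: "adm \<alpha>" and t: "t \<ge> 0" and y: "y > 0" and L: "L \<ge> 0"
    and cost: "expected_cost \<alpha> t \<le> ennreal L"
  shows "(\<integral>\<^sup>+\<omega>. ennreal (norm (Xs \<alpha> x t \<omega> - x)) \<partial>M)
    \<le> ennreal (deviation_bound \<sigma> C (gauss_moment_const CARD('d)) t (norm x) (L / y + t * g_conj y / y))"
proof (rule nn_integral_deviation_le[OF a t])
  show "0 \<le> L / y + t * g_conj y / y" using L y t g_conj_nonneg[of y] by simp
  have "(\<integral>\<^sup>+\<omega>. control_norm_integral \<alpha> t \<omega> \<partial>M)
      \<le> (\<integral>\<^sup>+\<omega>. ennreal (1 / y) * running_cost \<alpha> t \<omega> + ennreal (t * g_conj y / y) \<partial>M)"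
    by (intro nn_integral_mono control_norm_integral_le_running_cost[OF a t y])
  also have "\<dots> = ennreal (1 / y) * expected_cost \<alpha> t + ennreal (t * g_conj y / y)"
    using running_cost_measurable[OF a t] by (simp add: nn_integral_add nn_integral_cmult emeasure_space_1)
  also have "\<dots> \<le> ennreal (1 / y) * ennreal L + ennreal (t * g_conj y / y)"
    by (intro add_mono mult_left_mono cost) auto
  also have "\<dots> = ennreal (L / y + t * g_conj y / y)"
    using L y t g_conj_nonneg[of y]
    by (simp add: ennreal_mult[symmetric] ennreal_plus[symmetric] del: ennreal_plus)
  finally show "(\<integral>\<^sup>+\<omega>. control_norm_integral \<alpha> t \<omega> \<partial>M) \<le> ennreal (L / y + t * g_conj y / y)" .
qed

lemma prob_deviation_ge_le:
  assumes a: "adm \<alpha>" and t: "t \<ge> 0" and y: "y > 0" and L: "L \<ge> 0"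
    and cost: "expected_cost \<alpha> t \<le> ennreal L" and K: "K > 0"
  shows "prob {\<omega>\<in>space M. K \<le> norm (Xs \<alpha> x t \<omega> - x)}
    \<le> deviation_bound \<sigma> C (gauss_moment_const CARD('d)) t (norm x) (L / y + t * g_conj y / y) / K"
proof (rule prob_ge_le_nn_integral_div[OF _ K nn_integral_deviation_le_cost[OF a t y L cost]])
  show "(\<lambda>\<omega>. norm (Xs \<alpha> x t \<omega> - x)) \<in> borel_measurable M"
    using solution_measurable[OF a t] by measurable
  show "0 \<le> deviation_bound \<sigma> C (gauss_moment_const CARD('d)) t (norm x) (L / y + t * g_conj y / y)"
    using sigma_nonneg C_nonneg gauss_moment_const_pos[of "CARD('d)"] t L y g_conj_nonneg[of y]
    by (intro deviation_bound_nonneg) auto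
qed

lemma AE_dist_solutions_le:
  assumes a: "adm \<alpha>" and t: "t \<ge> 0"
  shows "AE \<omega> in M. norm (Xs \<alpha> x t \<omega> - Xs \<alpha> x' t \<omega>) \<le> norm (x - x') * (1 + C * t * exp (C * t))"
  using AE_space AE_solution_integral_equation[OF a, of x] AE_solution_integral_equation[OF a, of x']
proof eventually_elim
  case (elim \<omega>)
  show ?case
  proof (rule integral_equation_dist_le[OF t C_nonneg])
    show "norm (b (Xs \<alpha> x r \<omega>) (\<alpha> \<omega> r) - b (Xs \<alpha> x' r \<omega>) (\<alpha> \<omega> r)) \<le> C * norm (Xs \<alpha> x r \<omega> - Xs \<alpha> x' r \<omega>)"
      if "r \<in> {0..t}" for r
      using b_lipschitz admissible_in_A[OF a elim(1)] that by auto
  qed (use elim in \<open>auto intro: continuous_on_subset\<close>)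
qed

abbreviation terminal_mean :: "(real^'d \<Rightarrow> real) \<Rightarrow> ('a \<Rightarrow> real \<Rightarrow> real^'m) \<Rightarrow> real^'d \<Rightarrow> real \<Rightarrow> real" where
  "terminal_mean \<phi> \<alpha> x t \<equiv> (\<integral>\<omega>. \<phi> (Xs \<alpha> x t \<omega>) \<partial>M)"

lemma terminal_measurable:
  "continuous_bounded_by \<phi> R \<Longrightarrow> adm \<alpha> \<Longrightarrow> t \<ge> 0 \<Longrightarrow> (\<lambda>\<omega>. \<phi> (Xs \<alpha> x t \<omega>)) \<in> borel_measurable M"
  unfolding continuous_bounded_by_def
  using borel_measurable_continuous_onI solution_measurable by (blast intro: measurable_compose)

lemma abs_terminal_mean_le:
  assumes \<phi>: "continuous_bounded_by \<phi> R" and a: "adm \<alpha>" and t: "t \<ge> 0"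
  shows "\<bar>terminal_mean \<phi> \<alpha> x t\<bar> \<le> R"
proof -
  have b: "\<bar>\<phi> z\<bar> \<le> R" for z using \<phi> unfolding continuous_bounded_by_def by simp
  have "integrable M (\<lambda>\<omega>. \<phi> (Xs \<alpha> x t \<omega>))"
    by (rule integrable_const_bound[of _ R]) (use b terminal_measurable[OF \<phi> a t] in auto)
  then have "\<bar>terminal_mean \<phi> \<alpha> x t\<bar> \<le> (\<integral>\<omega>. R \<partial>M)"
    by (intro order_trans[OF integral_abs_bound] integral_mono) (use b in auto)
  then show ?thesis by (simp add: prob_space)
qed

lemma abs_terminal_mean_diff_le:
  assumes \<phi>1: "continuous_bounded_by \<phi>1 R" and \<phi>2: "continuous_bounded_by \<phi>2 R"
    and a: "adm \<alpha>" and t: "t \<ge> 0" and K: "K > 0" and \<eta>: "\<eta> \<ge> 0"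
    and close: "\<And>z z'. norm (z - x) < K \<Longrightarrow> norm (z - z') \<le> norm (x - x') * (1 + C * t * exp (C * t)) \<Longrightarrow>
      \<bar>\<phi>1 z - \<phi>2 z'\<bar> \<le> \<eta>"
  shows "\<bar>terminal_mean \<phi>1 \<alpha> x t - terminal_mean \<phi>2 \<alpha> x' t\<bar>
    \<le> \<eta> + 2 * R * prob {\<omega>\<in>space M. K \<le> norm (Xs \<alpha> x t \<omega> - x)}"
proof (rule abs_integral_diff_le[OF terminal_measurable[OF \<phi>1 a t] terminal_measurable[OF \<phi>2 a t] _ _ _ _ \<eta>])
  show "{\<omega>\<in>space M. K \<le> norm (Xs \<alpha> x t \<omega> - x)} \<in> sets M"
    using solution_measurable[OF a t] by measurable
  show "AE \<omega> in M. \<omega> \<notin> {\<omega>\<in>space M. K \<le> norm (Xs \<alpha> x t \<omega> - x)} \<longrightarrow>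
      \<bar>\<phi>1 (Xs \<alpha> x t \<omega>) - \<phi>2 (Xs \<alpha> x' t \<omega>)\<bar> \<le> \<eta>"
    using AE_space AE_dist_solutions_le[OF a t, of x x']
    by eventually_elim (auto intro!: close)
qed (use \<phi>1 \<phi>2 in \<open>auto simp: continuous_bounded_by_def\<close>)

lemma cheap_far_prob_uniformly_small:
  assumes R: "R \<ge> 0" and T: "T \<ge> 0" and c: "c \<ge> 0" and e: "e > 0"
  obtains K where "K > 0"
    and "\<And>\<alpha> t x. adm \<alpha> \<Longrightarrow> t \<in> {0..T} \<Longrightarrow> norm x \<le> c \<Longrightarrow> expected_cost \<alpha> t \<le> ennreal (2 * R + 1) \<Longrightarrow>
      2 * R * prob {\<omega>\<in>space M. K \<le> norm (Xs \<alpha> x t \<omega> - x)} \<le> e"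
proof -
  define \<kappa> where "\<kappa> = gauss_moment_const CARD('d)"
  define B where "B = deviation_bound \<sigma> C \<kappa> T c ((2 * R + 1) / 1 + T * g_conj 1 / 1)"
  have nonneg: "\<sigma> \<ge> 0" "C \<ge> 0" "\<kappa> \<ge> 0" "g_conj 1 \<ge> 0"
    using sigma_nonneg C_nonneg gauss_moment_const_pos g_conj_nonneg unfolding \<kappa>_def by (auto simp: less_imp_le)
  have B0: "B \<ge> 0" unfolding B_def using nonneg R T c by (intro deviation_bound_nonneg) auto
  define K where "K = 2 * R * B / e + 1"
  have K: "K > 0" unfolding K_def using R B0 e by (simp add: add_nonneg_pos)
  have "2 * R * prob {\<omega>\<in>space M. K \<le> norm (Xs \<alpha> x t \<omega> - x)} \<le> e"
    if a: "adm \<alpha>" and t: "t \<in> {0..T}" and x: "norm x \<le> c" and cost: "expected_cost \<alpha> t \<le> ennreal (2 * R + 1)"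
    for \<alpha> t x
  proof -
    have "prob {\<omega>\<in>space M. K \<le> norm (Xs \<alpha> x t \<omega> - x)}
        \<le> deviation_bound \<sigma> C \<kappa> t (norm x) ((2 * R + 1) / 1 + t * g_conj 1 / 1) / K"
      unfolding \<kappa>_def by (rule prob_deviation_ge_le[OF a _ _ _ cost K]) (use t R in auto)
    also have "\<dots> \<le> B / K"
      unfolding B_def using nonneg t x R K
      by (intro divide_right_mono deviation_bound_mono) (auto intro: mult_right_mono)
    finally have "2 * R * prob {\<omega>\<in>space M. K \<le> norm (Xs \<alpha> x t \<omega> - x)} \<le> 2 * R * (B / K)"
      using R by (intro mult_left_mono) auto
    also have "\<dots> \<le> e" using K e unfolding K_def by (simp add: field_simps)
    finally show ?thesis .
  qed
  with K that show ?thesis by blast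
qed

lemma eventually_deviation_bound_less:
  assumes L: "L \<ge> 0" and \<theta>: "\<theta> > 0"
  obtains y where "y > 0"
    and "\<forall>\<^sub>F t in at_right 0. deviation_bound \<sigma> C (gauss_moment_const CARD('d)) t c (L / y + t * g_conj y / y) < \<theta>"
proof -
  \<comment> \<open>At \<open>t = 0\<close> only the term \<open>C * (L / y)\<close> of the bound survives.\<close>
  define y where "y = 2 * C * L / \<theta> + 1"
  have y: "y > 0" unfolding y_def using C_nonneg L \<theta> by (simp add: add_nonneg_pos)
  define f where "f t = deviation_bound \<sigma> C (gauss_moment_const CARD('d)) t c (L / y + t * g_conj y / y)" for t
  have "(f \<longlongrightarrow> f 0) (at_right 0)"
    unfolding f_def deviation_bound_def using y by (intro tendsto_intros) auto
  moreover have "f 0 < \<theta>"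
  proof -
    have "C * L \<le> \<theta> / 2 * y" unfolding y_def using \<theta> by (simp add: field_simps)
    then have "C * L / y \<le> \<theta> / 2" using y by (simp add: pos_divide_le_eq mult.commute)
    moreover have "f 0 = C * L / y" unfolding f_def deviation_bound_def by simp
    ultimately show ?thesis using \<theta> by linarith
  qed
  ultimately have "\<forall>\<^sub>F t in at_right 0. f t < \<theta>" by (rule order_tendstoD(2))
  with y that show ?thesis unfolding f_def by blast
qed

lemma cheap_far_prob_small_time:
  assumes R: "R \<ge> 0" and \<rho>: "\<rho> > 0" and e: "e > 0"
  shows "\<forall>\<^sub>F t in at_right 0. \<forall>\<alpha> x. adm \<alpha> \<longrightarrow> norm x \<le> c \<longrightarrow> expected_cost \<alpha> t \<le> ennreal (2 * R + 1) \<longrightarrow>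
      2 * R * prob {\<omega>\<in>space M. \<rho> \<le> norm (Xs \<alpha> x t \<omega> - x)} \<le> e"
proof -
  define L where "L = 2 * R + 1"
  have L: "L > 0" unfolding L_def using R by simp
  have "e * \<rho> / L > 0" using e \<rho> L by simp
  then obtain y where y: "y > 0" and small: "\<forall>\<^sub>F t in at_right 0.
      deviation_bound \<sigma> C (gauss_moment_const CARD('d)) t c (L / y + t * g_conj y / y) < e * \<rho> / L"
    by (rule eventually_deviation_bound_less[OF less_imp_le[OF L]]) blast
  from small eventually_at_right_less show ?thesis
  proof eventually_elim
    case (elim t)
    show ?case
    proof (intro allI impI)
      fix \<alpha> and x :: "real^'d"
      assume a: "adm \<alpha>" and x: "norm x \<le> c" and cost: "expected_cost \<alpha> t \<le> ennreal (2 * R + 1)"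
      have "prob {\<omega>\<in>space M. \<rho> \<le> norm (Xs \<alpha> x t \<omega> - x)}
          \<le> deviation_bound \<sigma> C (gauss_moment_const CARD('d)) t (norm x) (L / y + t * g_conj y / y) / \<rho>"
        by (rule prob_deviation_ge_le[OF a _ y _ _ \<rho>]) (use elim L cost in \<open>auto simp: L_def\<close>)
      also have "\<dots> \<le> deviation_bound \<sigma> C (gauss_moment_const CARD('d)) t c (L / y + t * g_conj y / y) / \<rho>"
        using sigma_nonneg C_nonneg gauss_moment_const_pos[of "CARD('d)"] g_conj_nonneg[of y] elim x L y \<rho>
        by (intro divide_right_mono deviation_bound_mono) auto
      also have "\<dots> \<le> (e * \<rho> / L) / \<rho>"
        using elim \<rho> by (intro divide_right_mono) auto
      also have "\<dots> = e / L" using \<rho> by simp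
      finally have "2 * R * prob {\<omega>\<in>space M. \<rho> \<le> norm (Xs \<alpha> x t \<omega> - x)} \<le> 2 * R * (e / L)"
        using R by (intro mult_left_mono) auto
      also have "\<dots> = e * (2 * R / L)" by simp
      also have "\<dots> \<le> e" using e L unfolding L_def by (intro mult_left_le) auto
      finally show "2 * R * prob {\<omega>\<in>space M. \<rho> \<le> norm (Xs \<alpha> x t \<omega> - x)} \<le> e" .
    qed
  qed
qed

subsection \<open>The value function\<close>

abbreviation V :: "real \<Rightarrow> real^'d \<Rightarrow> (real^'d \<Rightarrow> real) \<Rightarrow> ereal" where
  "V t x \<phi> \<equiv> value_fn M F A g Xs t x \<phi>"

lemma V_eq_SUP:
  "V t x \<phi> = (SUP \<alpha>\<in>{\<alpha>. adm \<alpha>}. ereal (terminal_mean \<phi> \<alpha> x t) - enn2ereal (expected_cost \<alpha> t))"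
  unfolding value_fn_def payoff_def running_cost_def ..

lemma terminal_mean_zero_le_V: "ereal (terminal_mean \<phi> (\<lambda>\<omega> s. 0) x t) \<le> V t x \<phi>"
proof -
  have "ereal (terminal_mean \<phi> (\<lambda>\<omega> s. 0) x t)
      = ereal (terminal_mean \<phi> (\<lambda>\<omega> s. 0) x t) - enn2ereal (expected_cost (\<lambda>\<omega> s. 0) t)"
    by (simp add: expected_cost_zero zero_ennreal.rep_eq)
  also have "\<dots> \<le> V t x \<phi>" unfolding V_eq_SUP by (rule SUP_upper) (simp add: admissible_zero)
  finally show ?thesis .
qed

text \<open>A control whose expected cost exceeds \<open>2 R + 1\<close> is beaten by the zero control, so
  only such cheap controls matter for \<open>V\<close>.\<close>
lemma V_le_if_cheap_le:
  assumes \<phi>: "continuous_bounded_by \<phi> R" and t: "t \<ge> 0"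
    and cheap: "\<And>\<alpha>. adm \<alpha> \<Longrightarrow> expected_cost \<alpha> t \<le> ennreal (2 * R + 1) \<Longrightarrow>
      ereal (terminal_mean \<phi> \<alpha> x t) - enn2ereal (expected_cost \<alpha> t) \<le> B"
  shows "V t x \<phi> \<le> B"
  unfolding V_eq_SUP
proof (rule SUP_least)
  fix \<alpha> assume "\<alpha> \<in> {\<alpha>. adm \<alpha>}"
  then have a: "adm \<alpha>" by simp
  show "ereal (terminal_mean \<phi> \<alpha> x t) - enn2ereal (expected_cost \<alpha> t) \<le> B"
  proof (cases "expected_cost \<alpha> t \<le> ennreal (2 * R + 1)")
    case False
    have R: "R \<ge> 0" by (rule continuous_bounded_by_nonneg[OF \<phi>])
    from False have "enn2ereal (ennreal (2 * R + 1)) \<le> enn2ereal (expected_cost \<alpha> t)"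
      by (simp add: less_eq_ennreal.rep_eq)
    moreover have "enn2ereal (ennreal (2 * R + 1)) = ereal (2 * R + 1)"
      using R by (intro enn2ereal_ennreal) simp
    ultimately have "ereal (2 * R + 1) \<le> enn2ereal (expected_cost \<alpha> t)" by simp
    then have "ereal (terminal_mean \<phi> \<alpha> x t) - enn2ereal (expected_cost \<alpha> t) \<le> ereal R - ereal (2 * R + 1)"
      using abs_terminal_mean_le[OF \<phi> a t, of x] by (intro ereal_minus_mono) (auto simp: abs_le_iff)
    also have "\<dots> \<le> ereal (terminal_mean \<phi> (\<lambda>\<omega> s. 0) x t) - enn2ereal (expected_cost (\<lambda>\<omega> s. 0) t)"
      using abs_terminal_mean_le[OF \<phi> admissible_zero t, of x]
      unfolding expected_cost_zero by (simp add: zero_ennreal.rep_eq abs_le_iff)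
    also have "\<dots> \<le> B" by (rule cheap[OF admissible_zero]) (simp add: expected_cost_zero)
    finally show ?thesis .
  qed (rule cheap[OF a])
qed

lemma V_real:
  assumes \<phi>: "continuous_bounded_by \<phi> R" and t: "t \<ge> 0"
  shows "V t x \<phi> = ereal (real_of_ereal (V t x \<phi>))" and "\<bar>V t x \<phi>\<bar> \<le> ereal R"
proof -
  have "V t x \<phi> \<le> ereal R"
  proof (rule V_le_if_cheap_le[OF \<phi> t])
    fix \<alpha> assume a: "adm \<alpha>"
    have "ereal (terminal_mean \<phi> \<alpha> x t) - enn2ereal (expected_cost \<alpha> t) \<le> ereal (terminal_mean \<phi> \<alpha> x t)"
      by (rule ereal_diff_le_self) simp
    also have "\<dots> \<le> ereal R" using abs_terminal_mean_le[OF \<phi> a t, of x] by (simp add: abs_le_iff)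
    finally show "ereal (terminal_mean \<phi> \<alpha> x t) - enn2ereal (expected_cost \<alpha> t) \<le> ereal R" .
  qed
  moreover have "- ereal R \<le> ereal (terminal_mean \<phi> (\<lambda>\<omega> s. 0) x t)"
    using abs_terminal_mean_le[OF \<phi> admissible_zero t, of x] by (simp add: abs_le_iff)
  then have "- ereal R \<le> V t x \<phi>" using terminal_mean_zero_le_V by (rule order_trans)
  ultimately show "V t x \<phi> = ereal (real_of_ereal (V t x \<phi>))" and "\<bar>V t x \<phi>\<bar> \<le> ereal R"
    by (cases "V t x \<phi>"; simp)+
qed

lemma V_le_V_add:
  assumes \<phi>1: "continuous_bounded_by \<phi>1 R" and \<phi>2: "continuous_bounded_by \<phi>2 R" and t: "t \<ge> 0"
    and cheap: "\<And>\<alpha>. adm \<alpha> \<Longrightarrow> expected_cost \<alpha> t \<le> ennreal (2 * R + 1) \<Longrightarrow>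
      terminal_mean \<phi>1 \<alpha> x t \<le> terminal_mean \<phi>2 \<alpha> x' t + \<eta>"
  shows "real_of_ereal (V t x \<phi>1) \<le> real_of_ereal (V t x' \<phi>2) + \<eta>"
proof -
  have "V t x \<phi>1 \<le> V t x' \<phi>2 + ereal \<eta>"
  proof (rule V_le_if_cheap_le[OF \<phi>1 t])
    fix \<alpha> assume a: "adm \<alpha>" and cost: "expected_cost \<alpha> t \<le> ennreal (2 * R + 1)"
    then obtain j where j: "expected_cost \<alpha> t = ennreal j" "j \<ge> 0"
      by (cases "expected_cost \<alpha> t") (auto simp: top_unique)
    have "ereal (terminal_mean \<phi>1 \<alpha> x t) - enn2ereal (expected_cost \<alpha> t)
        \<le> ereal (terminal_mean \<phi>2 \<alpha> x' t) - enn2ereal (expected_cost \<alpha> t) + ereal \<eta>"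
      using cheap[OF a cost] j by simp
    also have "\<dots> \<le> V t x' \<phi>2 + ereal \<eta>"
      unfolding V_eq_SUP by (intro add_right_mono SUP_upper) (use a in simp)
    finally show "ereal (terminal_mean \<phi>1 \<alpha> x t) - enn2ereal (expected_cost \<alpha> t) \<le> V t x' \<phi>2 + ereal \<eta>" .
  qed
  then show ?thesis
    using V_real(1)[OF \<phi>1 t, of x] V_real(1)[OF \<phi>2 t, of x'] by (metis plus_ereal.simps(1) ereal_less_eq(3))
qed

lemma abs_V_diff_le:
  assumes \<phi>1: "continuous_bounded_by \<phi>1 R" and \<phi>2: "continuous_bounded_by \<phi>2 R" and t: "t \<ge> 0"
    and cheap: "\<And>\<alpha>. adm \<alpha> \<Longrightarrow> expected_cost \<alpha> t \<le> ennreal (2 * R + 1) \<Longrightarrow>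
      \<bar>terminal_mean \<phi>1 \<alpha> x t - terminal_mean \<phi>2 \<alpha> x' t\<bar> \<le> \<eta>"
  shows "\<bar>real_of_ereal (V t x \<phi>1) - real_of_ereal (V t x' \<phi>2)\<bar> \<le> \<eta>"
proof -
  have "real_of_ereal (V t x \<phi>1) \<le> real_of_ereal (V t x' \<phi>2) + \<eta>"
    by (rule V_le_V_add[OF \<phi>1 \<phi>2 t]) (use cheap in \<open>force simp: abs_le_iff\<close>)
  moreover have "real_of_ereal (V t x' \<phi>2) \<le> real_of_ereal (V t x \<phi>1) + \<eta>"
    by (rule V_le_V_add[OF \<phi>2 \<phi>1 t]) (use cheap in \<open>force simp: abs_le_iff\<close>)
  ultimately show ?thesis by (simp add: abs_le_iff)
qed

lemma V_const:
  assumes t: "t \<ge> 0" shows "real_of_ereal (V t x (\<lambda>_. c)) = c"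
proof -
  have const: "continuous_bounded_by (\<lambda>_. c) \<bar>c\<bar>" by (rule continuous_bounded_by_const) simp
  have "V t x (\<lambda>_. c) \<le> ereal c"
  proof (rule V_le_if_cheap_le[OF const t])
    fix \<alpha> show "ereal (terminal_mean (\<lambda>_. c) \<alpha> x t) - enn2ereal (expected_cost \<alpha> t) \<le> ereal c"
      using ereal_diff_le_self[of "enn2ereal (expected_cost \<alpha> t)" "ereal c"] by (simp add: prob_space)
  qed
  moreover have "ereal c \<le> V t x (\<lambda>_. c)"
    using terminal_mean_zero_le_V[of "\<lambda>_. c" x t] by (simp add: prob_space)
  ultimately show ?thesis by simp
qed

lemma abs_V_diff_le_of_close:
  assumes \<phi>1: "continuous_bounded_by \<phi>1 R" and \<phi>2: "continuous_bounded_by \<phi>2 R"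
    and t: "t \<ge> 0" and K: "K > 0" and \<eta>: "\<eta> \<ge> 0"
    and close: "\<And>z z'. norm (z - x) < K \<Longrightarrow> norm (z - z') \<le> norm (x - x') * (1 + C * t * exp (C * t)) \<Longrightarrow>
      \<bar>\<phi>1 z - \<phi>2 z'\<bar> \<le> \<eta>"
    and far: "\<And>\<alpha>. adm \<alpha> \<Longrightarrow> expected_cost \<alpha> t \<le> ennreal (2 * R + 1) \<Longrightarrow>
      2 * R * prob {\<omega>\<in>space M. K \<le> norm (Xs \<alpha> x t \<omega> - x)} \<le> \<eta>'"
  shows "\<bar>real_of_ereal (V t x \<phi>1) - real_of_ereal (V t x' \<phi>2)\<bar> \<le> \<eta> + \<eta>'"
proof (rule abs_V_diff_le[OF \<phi>1 \<phi>2 t])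
  fix \<alpha> assume a: "adm \<alpha>" and cost: "expected_cost \<alpha> t \<le> ennreal (2 * R + 1)"
  show "\<bar>terminal_mean \<phi>1 \<alpha> x t - terminal_mean \<phi>2 \<alpha> x' t\<bar> \<le> \<eta> + \<eta>'"
    using abs_terminal_mean_diff_le[OF \<phi>1 \<phi>2 a t K \<eta>, where x = x and x' = x', OF close]
      far[OF a cost] by linarith
qed

lemma V_continuous:
  assumes \<phi>: "continuous_bounded_by \<phi> R" and t: "t \<ge> 0"
  shows "continuous_on UNIV (\<lambda>x. real_of_ereal (V t x \<phi>))"
  unfolding continuous_on_iff
proof (intro ballI allI impI)
  fix x0 :: "real^'d" and e :: real assume e: "e > 0"
  have R: "R \<ge> 0" by (rule continuous_bounded_by_nonneg[OF \<phi>])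
  have "e / 4 > 0" using e by simp
  then obtain K where K: "K > 0" and far: "\<And>\<alpha> s x. adm \<alpha> \<Longrightarrow> s \<in> {0..t} \<Longrightarrow> norm x \<le> norm x0 \<Longrightarrow>
      expected_cost \<alpha> s \<le> ennreal (2 * R + 1) \<Longrightarrow>
      2 * R * prob {\<omega>\<in>space M. K \<le> norm (Xs \<alpha> x s \<omega> - x)} \<le> e / 4"
    by (rule cheap_far_prob_uniformly_small[OF R t norm_ge_zero[of x0]]) blast
  from continuous_bounded_by_continuous[OF \<phi>] \<open>e / 4 > 0\<close>
  obtain d where d: "d > 0" and uc: "\<And>z z'. norm z \<le> norm x0 + K + 1 \<Longrightarrow> norm z' \<le> norm x0 + K + 1 \<Longrightarrow>
      dist z' z < d \<Longrightarrow> \<bar>\<phi> z' - \<phi> z\<bar> < e / 4"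
    by (rule continuous_imp_uniform_on_cball) blast
  define \<Lambda> where "\<Lambda> = 1 + C * t * exp (C * t)"
  have \<Lambda>: "\<Lambda> \<ge> 1" unfolding \<Lambda>_def using C_nonneg t by simp
  define \<delta> where "\<delta> = min d 1 / \<Lambda>"
  have \<delta>: "\<delta> > 0" unfolding \<delta>_def using d \<Lambda> by simp
  have "\<bar>real_of_ereal (V t x0 \<phi>) - real_of_ereal (V t x' \<phi>)\<bar> \<le> e / 4 + e / 4"
    if x': "dist x' x0 < \<delta>" for x'
  proof (rule abs_V_diff_le_of_close[OF \<phi> \<phi> t K])
    fix z z' assume z: "norm (z - x0) < K"
      and "norm (z - z') \<le> norm (x0 - x') * (1 + C * t * exp (C * t))"
    then have "norm (z - z') \<le> norm (x0 - x') * \<Lambda>" unfolding \<Lambda>_def by simp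
    also have "\<dots> < \<delta> * \<Lambda>"
      using x' \<Lambda> by (intro mult_strict_right_mono) (auto simp: dist_norm norm_minus_commute)
    finally have "norm (z - z') < min d 1" unfolding \<delta>_def using \<Lambda> by simp
    moreover have "norm z \<le> norm x0 + K"
      using norm_triangle_ineq[of "z - x0" x0] z by simp
    moreover have "norm z' \<le> norm z + norm (z - z')"
      using norm_triangle_ineq[of z "z' - z"] by (simp add: norm_minus_commute)
    ultimately show "\<bar>\<phi> z - \<phi> z'\<bar> \<le> e / 4"
      using uc[of z z'] by (simp add: dist_norm norm_minus_commute abs_minus_commute)
  qed (use e far t in auto)
  with \<delta> e show "\<exists>\<delta>>0. \<forall>x'\<in>UNIV. dist x' x0 < \<delta> \<longrightarrow>
      dist (real_of_ereal (V t x' \<phi>)) (real_of_ereal (V t x0 \<phi>)) < e"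
    by (intro exI[of _ \<delta>]) (force simp: dist_real_def abs_minus_commute)
qed

lemma V_bcontfun:
  assumes \<phi>: "\<phi> \<in> bcontfun" and t: "t \<ge> 0"
  shows "(\<lambda>x. real_of_ereal (V t x \<phi>)) \<in> bcontfun" and "\<bar>V t x \<phi>\<bar> \<le> ereal (sup_norm \<phi>)"
proof -
  have \<phi>R: "continuous_bounded_by \<phi> (sup_norm \<phi>)" by (rule bcontfun_imp_continuous_bounded_by[OF \<phi>])
  have "\<bar>real_of_ereal (V t y \<phi>)\<bar> \<le> sup_norm \<phi>" for y
    using V_real[OF \<phi>R t, of y] by (cases "V t y \<phi>") auto
  then have "bounded (range (\<lambda>x. real_of_ereal (V t x \<phi>)))"
    unfolding bounded_iff by auto
  with V_continuous[OF \<phi>R t] show "(\<lambda>x. real_of_ereal (V t x \<phi>)) \<in> bcontfun"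
    unfolding bcontfun_def by simp
  show "\<bar>V t x \<phi>\<bar> \<le> ereal (sup_norm \<phi>)" by (rule V_real(2)[OF \<phi>R t])
qed

lemma V_uniform_limit_at_0:
  assumes \<phi>: "\<phi> \<in> bcontfun" and K: "compact K"
  shows "uniform_limit K (\<lambda>t x. real_of_ereal (V t x \<phi>)) \<phi> (at_right 0)"
  unfolding uniform_limit_iff
proof (intro allI impI)
  fix e :: real assume e: "e > 0"
  define R where "R = sup_norm \<phi>"
  have \<phi>R: "continuous_bounded_by \<phi> R" unfolding R_def by (rule bcontfun_imp_continuous_bounded_by[OF \<phi>])
  have R: "R \<ge> 0" by (rule continuous_bounded_by_nonneg[OF \<phi>R])
  obtain c where c: "\<And>x. x \<in> K \<Longrightarrow> norm x \<le> c"
    using compact_imp_bounded[OF K] unfolding bounded_iff by auto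
  have "e / 4 > 0" using e by simp
  with continuous_bounded_by_continuous[OF \<phi>R]
  obtain d where d: "d > 0" and uc: "\<And>z z'. norm z \<le> c + 1 \<Longrightarrow> norm z' \<le> c + 1 \<Longrightarrow>
      dist z' z < d \<Longrightarrow> \<bar>\<phi> z' - \<phi> z\<bar> < e / 4"
    by (rule continuous_imp_uniform_on_cball) blast
  define \<rho> where "\<rho> = min d 1"
  have \<rho>: "\<rho> > 0" unfolding \<rho>_def using d by simp
  have close: "\<bar>\<phi> z - \<phi> x\<bar> \<le> e / 4" if x: "x \<in> K" and z: "norm (z - x) < \<rho>" for x z
  proof -
    have "norm z \<le> norm x + norm (z - x)" using norm_triangle_ineq[of x "z - x"] by simp
    then show ?thesis using uc[of x z] c[OF x] z unfolding \<rho>_def by (simp add: dist_norm)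
  qed
  show "\<forall>\<^sub>F t in at_right 0. \<forall>x\<in>K. dist (real_of_ereal (V t x \<phi>)) (\<phi> x) < e"
    using cheap_far_prob_small_time[OF R \<rho> \<open>e / 4 > 0\<close>, where c = c] eventually_at_right_less
  proof eventually_elim
    case (elim t)
    show ?case
    proof
      fix x assume x: "x \<in> K"
      have \<phi>x: "continuous_bounded_by (\<lambda>_. \<phi> x) R"
        by (intro continuous_bounded_by_const continuous_bounded_by_bound[OF \<phi>R])
      have "\<bar>real_of_ereal (V t x \<phi>) - real_of_ereal (V t x (\<lambda>_. \<phi> x))\<bar> \<le> e / 4 + e / 4"
        by (rule abs_V_diff_le_of_close[OF \<phi>R \<phi>x _ \<rho>]) (use e elim close[OF x] c[OF x] in auto)
      then show "dist (real_of_ereal (V t x \<phi>)) (\<phi> x) < e"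
        using e elim V_const[of t x "\<phi> x"] by (simp add: dist_real_def)
    qed
  qed
qed

lemma V_local_dependence:
  assumes R: "R \<ge> 0" and T: "T \<ge> 0" and c: "c \<ge> 0" and \<epsilon>: "\<epsilon> > 0"
  shows "\<exists>r>0. \<forall>\<phi>1\<in>bcontfun. \<forall>\<phi>2\<in>bcontfun. sup_norm \<phi>1 \<le> R \<longrightarrow> sup_norm \<phi>2 \<le> R \<longrightarrow>
    (SUP y\<in>cball 0 r. \<bar>\<phi>1 y - \<phi>2 y\<bar>) < \<epsilon> / 3 \<longrightarrow>
    (SUP t\<in>{0..T}. SUP x\<in>cball 0 c. \<bar>real_of_ereal (V t x \<phi>1) - real_of_ereal (V t x \<phi>2)\<bar>) < \<epsilon>"
proof -
  have "\<epsilon> / 6 > 0" using \<epsilon> by simp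
  then obtain K where K: "K > 0" and far: "\<And>\<alpha> t x. adm \<alpha> \<Longrightarrow> t \<in> {0..T} \<Longrightarrow> norm x \<le> c \<Longrightarrow>
      expected_cost \<alpha> t \<le> ennreal (2 * R + 1) \<Longrightarrow>
      2 * R * prob {\<omega>\<in>space M. K \<le> norm (Xs \<alpha> x t \<omega> - x)} \<le> \<epsilon> / 6"
    by (rule cheap_far_prob_uniformly_small[OF R T c]) blast
  show ?thesis
  proof (intro exI[of _ "c + K"] conjI ballI impI)
    show "c + K > 0" using c K by simp
    fix \<phi>1 \<phi>2 :: "real^'d \<Rightarrow> real" assume "\<phi>1 \<in> bcontfun" "\<phi>2 \<in> bcontfun" "sup_norm \<phi>1 \<le> R" "sup_norm \<phi>2 \<le> R"
      and small: "(SUP y\<in>cball 0 (c + K). \<bar>\<phi>1 y - \<phi>2 y\<bar>) < \<epsilon> / 3"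
    then have \<phi>1: "continuous_bounded_by \<phi>1 R" and \<phi>2: "continuous_bounded_by \<phi>2 R"
      by (auto intro: continuous_bounded_by_mono bcontfun_imp_continuous_bounded_by)
    define S where "S = (SUP y\<in>cball 0 (c + K). \<bar>\<phi>1 y - \<phi>2 y\<bar>)"
    have S: "\<bar>\<phi>1 z - \<phi>2 z\<bar> \<le> S" if "norm z \<le> c + K" for z
      unfolding S_def by (rule abs_diff_le_SUP_cball[OF \<phi>1 \<phi>2 that])
    have S0: "S \<ge> 0" using S[of 0] c K by (simp add: order_trans[OF abs_ge_zero])
    have bnd: "\<bar>real_of_ereal (V t x \<phi>1) - real_of_ereal (V t x \<phi>2)\<bar> \<le> S + \<epsilon> / 6"
      if t: "t \<in> {0..T}" and x: "x \<in> cball 0 c" for t x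
    proof (rule abs_V_diff_le_of_close[OF \<phi>1 \<phi>2 _ K S0])
      fix z z' assume "norm (z - x) < K" and "norm (z - z') \<le> norm (x - x) * (1 + C * t * exp (C * t))"
      moreover have "norm z \<le> norm x + norm (z - x)" using norm_triangle_ineq[of x "z - x"] by simp
      ultimately show "\<bar>\<phi>1 z - \<phi>2 z'\<bar> \<le> S" using S[of z] x by simp
    qed (use t x far in auto)
    have "(SUP t\<in>{0..T}. SUP x\<in>cball 0 c. \<bar>real_of_ereal (V t x \<phi>1) - real_of_ereal (V t x \<phi>2)\<bar>)
        \<le> S + \<epsilon> / 6"
    proof (rule cSUP_least)
      fix t assume "t \<in> {0..T}"
      then show "(SUP x\<in>cball 0 c. \<bar>real_of_ereal (V t x \<phi>1) - real_of_ereal (V t x \<phi>2)\<bar>) \<le> S + \<epsilon> / 6"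
        using c by (intro cSUP_least bnd) auto
    qed (use T in simp)
    also have "\<dots> < \<epsilon>" using small \<epsilon> unfolding S_def by simp
    finally show "(SUP t\<in>{0..T}. SUP x\<in>cball 0 c. \<bar>real_of_ereal (V t x \<phi>1) - real_of_ereal (V t x \<phi>2)\<bar>) < \<epsilon>" .
  qed
qed

end

theorem mainTheorem16:
  fixes M :: "'a measure" and F :: "real \<Rightarrow> 'a measure"
    and W :: "real \<Rightarrow> 'a \<Rightarrow> real^'d::finite"
    and \<sigma> :: real and A :: "(real^'m::finite) set" and C :: real
    and b :: "real^'d \<Rightarrow> real^'m \<Rightarrow> real^'d"
    and g :: "real^'m \<Rightarrow> real"
    and Xs :: "('a \<Rightarrow> real \<Rightarrow> real^'m) \<Rightarrow> real^'d \<Rightarrow> real \<Rightarrow> 'a \<Rightarrow> real^'d"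
  assumes "prob_space M" and "complete_measure M"
    and "usual_filtration M F"
    and "brownian_motion M F W"
    and "\<sigma> > 0"
    and "A \<noteq> {}" and "0 \<in> A"
    and "C \<ge> 0"
    and "(\<lambda>(x, a). b x a) \<in> borel_measurable (restrict_space borel (UNIV \<times> A))"
    and "\<And>x. b x 0 = 0"
    and "\<And>x1 x2 a. a \<in> A \<Longrightarrow> norm (b x1 a - b x2 a) \<le> C * norm (x1 - x2)"
    and "\<And>x a. a \<in> A \<Longrightarrow> norm (b x a) \<le> C * (1 + norm x + norm a)"
    and "g \<in> borel_measurable (restrict_space borel A)"
    and "\<And>a. a \<in> A \<Longrightarrow> g a \<ge> 0"
    and "g 0 = 0"
    and "\<And>y. y \<ge> 0 \<Longrightarrow> bdd_above ((\<lambda>a. norm a * y - g a) ` A)"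
    and "\<And>\<alpha> x. admissible M F A \<alpha> \<Longrightarrow> strong_solution M F W b \<sigma> \<alpha> x (Xs \<alpha> x)"
  shows
    "(\<forall>\<phi>\<in>bcontfun. \<forall>t\<ge>0.
        (\<lambda>x. real_of_ereal (value_fn M F A g Xs t x \<phi>)) \<in> bcontfun \<and>
        (\<forall>x. \<bar>value_fn M F A g Xs t x \<phi>\<bar> \<le> ereal (sup_norm \<phi>)))
     \<and> (\<forall>\<phi>\<in>bcontfun. \<forall>K. compact K \<longrightarrow>
          uniform_limit K (\<lambda>t x. real_of_ereal (value_fn M F A g Xs t x \<phi>)) \<phi> (at_right 0))
     \<and> (\<forall>R T c \<epsilon>. R \<ge> 0 \<longrightarrow> T \<ge> 0 \<longrightarrow> c \<ge> 0 \<longrightarrow> \<epsilon> > 0 \<longrightarrow>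
          (\<exists>r>0. \<forall>\<phi>1\<in>bcontfun. \<forall>\<phi>2\<in>bcontfun.
             sup_norm \<phi>1 \<le> R \<longrightarrow> sup_norm \<phi>2 \<le> R \<longrightarrow>
             (SUP y\<in>cball 0 r. \<bar>\<phi>1 y - \<phi>2 y\<bar>) < \<epsilon> / 3 \<longrightarrow>
             (SUP t\<in>{0..T}. SUP x\<in>cball 0 c.
                \<bar>real_of_ereal (value_fn M F A g Xs t x \<phi>1) - real_of_ereal (value_fn M F A g Xs t x \<phi>2)\<bar>) < \<epsilon>))"
proof -
  interpret controlled_sde M F W \<sigma> A C b g Xs
    by (intro controlled_sde.intro filtered_brownian_motion.intro controlled_sde_axioms.intro
        filtered_brownian_motion_axioms.intro) (use assms in \<open>simp_all add: less_imp_le\<close>)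
  show ?thesis
    using V_bcontfun V_uniform_limit_at_0 V_local_dependence by blast
qed

end
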